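(* Consider a Hamiltonian system $\dot p=-\nabla_qH(p,q)$, $\dot q=\nabla_pH(p,q)$, $p(t_0)=p_0$, $q(t_0)=q_0$, with smooth Hamiltonian $H$ and $C^\infty$ solution $(p(t),q(t))$, approximated by a partitioned linear multistep method $\rho_p(E)p_n=h\sigma_p(E)f(p_n,q_n)$, $\rho_q(E)q_n=h\sigma_q(E)g(p_n,q_n)$ (with $f=-\nabla_qH$, $g=\nabla_pH$) of order $r$ in which both methods $(\rho_p,\sigma_p)$ and $(\rho_q,\sigma_q)$ are symmetric. Let $(p_h(t),q_h(t))=(p(t),q(t))+\sum_{j=r}^{2r-1}h^j(e_{j,1,p}(t),e_{j,1,q}(t))$ be the smooth part of the numerical solution, where $e_{j,1,p},e_{j,1,q}$ are the coefficient functions associated to the root $1$ in the asymptotic expansion of the global error, satisfying $$\frac{d}{dt}\begin{pmatrix}e_{j,1,p}\\ e_{j,1,q}\end{pmatrix}=\begin{pmatrix}f_p&f_q\\ g_p&g_q\end{pmatrix}(p(t),q(t))\begin{pmatrix}e_{j,1,p}\\ e_{j,1,q}\end{pmatrix}-\begin{pmatrix}c_{j,p}p^{(j+1)}\\ c_{j,q}q^{(j+1)}\end{pmatrix}.$$ Then $$H(p_h(t),q_h(t))-H(p_h(t_0),q_h(t_0))=\sum_{k=r/2}^{r-1}h^{2k}\Big[c_{2k,q}\sum_{l=1}^k(-1)^{l+1}\big[p^{(l)}(t)^Tq^{(2k+1-l)}(t)-p^{(l)}(t_0)^Tq^{(2k+1-l)}(t_0)\big]$$ $$-c_{2k,p}\sum_{l=1}^k(-1)^{l+1}\big[q^{(l)}(t)^Tp^{(2k+1-l)}(t)-q^{(l)}(t_0)^Tp^{(2k+1-l)}(t_0)\big]\Big]$$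 $$+\sum_{k=r/2}^{r-1}h^{2k}(-1)^{k+2}(c_{2k,q}-c_{2k,p})\int_{t_0}^tp^{(k+1)}(s)^Tq^{(k+1)}(s)\,ds+O(t\,h^{2r}).$$
   Context: $E$ is the shift operator, $t_n=nh$. Both methods are zero-stable of order $r$, with local truncation errors $\rho_\alpha(E)y(t_n)-h\sigma_\alpha(E)\dot y(t_n)=\sigma_\alpha(E)(\sum_{j=r}^{2r-1}c_{j,\alpha}h^{j+1}y^{(j+1)}(t_n))+O(h^{2r+1})$, $\alpha\in\{p,q\}$, for smooth $y$. A linear multistep method $(\rho,\sigma)$ with $\deg\rho=k$ is symmetric if $\rho(x)=-x^k\rho(1/x)$ and $\sigma(x)=x^k\sigma(1/x)$; for symmetric methods the order $r$ is even and $c_{j,\alpha}=0$ for odd $j$. *)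

theory Defs
  imports "HOL-Analysis.Analysis" "HOL-Computational_Algebra.Computational_Algebra"
begin

text \<open>The formal power series of rho(e^z) for a real polynomial rho (z corresponds to hD,
  since E = e^{hD}).\<close>
definition lmm_fps :: "real poly \<Rightarrow> real fps" where
  "lmm_fps \<rho> = (\<Sum>i\<le>degree \<rho>. fps_const (coeff \<rho> i) * fps_exp (real i))"

definition lmm :: "real poly \<Rightarrow> real poly \<Rightarrow> bool" where
  "lmm \<rho> \<sigma> \<longleftrightarrow> \<rho> \<noteq> 0 \<and> degree \<sigma> \<le> degree \<rho>"

definition zero_stable :: "real poly \<Rightarrow> bool" where
  "zero_stable \<rho> \<longleftrightarrow> \<rho> \<noteq> 0 \<and>
     (\<forall>z::complex. poly (map_poly complex_of_real \<rho>) z = 0 \<longrightarrow>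
        cmod z \<le> 1 \<and> (cmod z = 1 \<longrightarrow> order z (map_poly complex_of_real \<rho>) = 1))"

definition lmm_order :: "real poly \<Rightarrow> real poly \<Rightarrow> nat \<Rightarrow> bool" where
  "lmm_order \<rho> \<sigma> r \<longleftrightarrow>
     (\<forall>n\<le>r. (lmm_fps \<rho> - fps_X * lmm_fps \<sigma>) $ n = 0) \<and>
     (lmm_fps \<rho> - fps_X * lmm_fps \<sigma>) $ (r + 1) \<noteq> 0"

definition symmetric_lmm :: "real poly \<Rightarrow> real poly \<Rightarrow> bool" where
  "symmetric_lmm \<rho> \<sigma> \<longleftrightarrow>
     (\<forall>x::real. x \<noteq> 0 \<longrightarrow> poly \<rho> x = - (x ^ degree \<rho>) * poly \<rho> (1 / x)) \<and>
     (\<forall>x::real. x \<noteq> 0 \<longrightarrow> poly \<sigma> x = x ^ degree \<rho> * poly \<sigma> (1 / x))"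

text \<open>Local truncation error expansion:
  rho(E)y(t_n) - h sigma(E) y'(t_n) = sigma(E)(sum_{j=r}^{2r-1} c_j h^{j+1} y^{(j+1)}(t_n)) + O(h^{2r+1}),
  i.e. rho(e^z) - z sigma(e^z) - sigma(e^z) sum_{j=r}^{2r-1} c_j z^{j+1} = O(z^{2r+1}).\<close>
definition lte_constants :: "real poly \<Rightarrow> real poly \<Rightarrow> nat \<Rightarrow> (nat \<Rightarrow> real) \<Rightarrow> bool" where
  "lte_constants \<rho> \<sigma> r c \<longleftrightarrow>
     (\<forall>n\<le>2*r. (lmm_fps \<rho> - fps_X * lmm_fps \<sigma>
                - lmm_fps \<sigma> * (\<Sum>j\<in>{r..<2*r}. fps_const (c j) * fps_X ^ (j + 1))) $ n = 0)"

fun vderiv_n :: "nat \<Rightarrow> (real \<Rightarrow> 'a::real_normed_vector) \<Rightarrow> real \<Rightarrow> 'a" where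
  "vderiv_n 0 f = f"
| "vderiv_n (Suc n) f = (\<lambda>t. vector_derivative (vderiv_n n f) (at t))"

definition smooth_on_real :: "real set \<Rightarrow> (real \<Rightarrow> 'a::real_normed_vector) \<Rightarrow> bool" where
  "smooth_on_real S f \<longleftrightarrow> (\<forall>n. \<forall>t\<in>S. vderiv_n n f differentiable (at t))"

definition dirderiv :: "('a::real_normed_vector \<Rightarrow> 'b::real_normed_vector) \<Rightarrow> 'a \<Rightarrow> 'a \<Rightarrow> 'b" where
  "dirderiv F v x = vector_derivative (\<lambda>s. F (x + s *\<^sub>R v)) (at 0)"

fun iter_dirderiv :: "('a::real_normed_vector \<Rightarrow> 'b::real_normed_vector) \<Rightarrow> 'a list \<Rightarrow> 'a \<Rightarrow> 'b" where
  "iter_dirderiv F [] = F"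
| "iter_dirderiv F (v # vs) = dirderiv (iter_dirderiv F vs) v"

definition smooth :: "('a::euclidean_space \<Rightarrow> 'b::real_normed_vector) \<Rightarrow> bool" where
  "smooth F \<longleftrightarrow> (\<forall>vs. set vs \<subseteq> Basis \<longrightarrow> (\<forall>x. iter_dirderiv F vs differentiable (at x)))"

definition grad_p :: "((real^'d) \<times> (real^'d) \<Rightarrow> real) \<Rightarrow> (real^'d) \<times> (real^'d) \<Rightarrow> real^'d" where
  "grad_p H x = (\<chi> i. dirderiv H (axis i 1, 0) x)"

definition grad_q :: "((real^'d) \<times> (real^'d) \<Rightarrow> real) \<Rightarrow> (real^'d) \<times> (real^'d) \<Rightarrow> real^'d" where
  "grad_q H x = (\<chi> i. dirderiv H (0, axis i 1) x)"

definition jac_p :: "((real^'d) \<times> (real^'d) \<Rightarrow> real^'d) \<Rightarrow> (real^'d) \<times> (real^'d) \<Rightarrow> real^'d^'d" where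
  "jac_p F x = (\<chi> i k. dirderiv (\<lambda>y. F y $ i) (axis k 1, 0) x)"

definition jac_q :: "((real^'d) \<times> (real^'d) \<Rightarrow> real^'d) \<Rightarrow> (real^'d) \<times> (real^'d) \<Rightarrow> real^'d^'d" where
  "jac_q F x = (\<chi> i k. dirderiv (\<lambda>y. F y $ i) (0, axis k 1) x)"

end

(*
  For a symmetric method, e^{-kz/2} \<rho>(e^z) is an odd and e^{-kz/2} \<sigma>(e^z) an even power series in z,
  so comparing coefficients in the error expansion forces the error constants c_j with odd j to vanish
  and the order r to be even.

  Along the smooth part (p + \<delta>p, q + \<delta>q) the derivative of H is \<nabla>H(p + \<delta>p, q + \<delta>q) applied to the
  velocity given by the error equations. Expanding \<nabla>H to first order around (p, q), all terms linear
  in (\<delta>p, \<delta>q) cancel by the antisymmetry of the symplectic form, and what survives besides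
  O(h^{2r}) is \<Sum>_j h^j (c_{j,q} p' \<bullet> q^{(j+1)} - c_{j,p} q' \<bullet> p^{(j+1)}), with only even j = 2k.
  Repeated integration by parts writes p' \<bullet> q^{(2k+1)} as the derivative of the alternating boundary
  sum plus (-1)^k p^{(k+1)} \<bullet> q^{(k+1)}, which gives the integral terms. The mean value inequality
  turns the O(h^{2r}) bound on the derivative of the difference into C (t - t0) h^{2r}.
*)
theory Submission
  imports Defs
begin

no_notation fps_nth (infixl \<open>$\<close> 75)

section \<open>Symmetric linear multistep methods\<close>

lemma coeff_eq_of_poly_reflect:
  fixes f :: "real poly" and s :: real
  assumes deg: "degree f \<le> k"
    and reflect: "\<And>x. x \<noteq> 0 \<Longrightarrow> poly f x = s * x ^ k * poly f (1 / x)"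
    and "i \<le> k"
  shows "coeff f i = s * coeff f (k - i)"
proof -
  define g where "g = (\<Sum>i\<le>k. monom (coeff f i - s * coeff f (k - i)) i)"
  have poly_f: "poly f x = (\<Sum>i\<le>k. coeff f i * x ^ i)" for x
    by (subst poly_as_sum_of_monoms'[OF deg, symmetric]) (simp add: poly_sum poly_monom)
  have roots: "poly g x = 0" if "x \<noteq> 0" for x
  proof -
    have "x ^ k * poly f (1 / x) = (\<Sum>i\<le>k. x ^ k * coeff f i / x ^ i)"
      by (simp add: poly_f sum_distrib_left power_one_over)
    also have "\<dots> = (\<Sum>i\<le>k. coeff f i * x ^ (k - i))"
      by (intro sum.cong refl) (simp add: power_diff that)
    also have "\<dots> = (\<Sum>i\<le>k. coeff f (k - i) * x ^ i)"
      by (rule sum.reindex_bij_witness[of _ "\<lambda>i. k - i" "\<lambda>i. k - i"]) auto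
    finally have "x ^ k * poly f (1 / x) = (\<Sum>i\<le>k. coeff f (k - i) * x ^ i)" .
    then have "poly g x = poly f x - s * (x ^ k * poly f (1 / x))"
      by (simp add: g_def poly_sum poly_monom poly_f sum_subtractf sum_distrib_left
          left_diff_distrib mult.assoc)
    then show ?thesis using reflect[OF that] by simp
  qed
  have "g = 0"
  proof (rule ccontr)
    assume "g \<noteq> 0"
    then have "finite (insert 0 {x. poly g x = 0})" by (simp add: poly_roots_finite)
    moreover have "insert 0 {x. poly g x = 0} = (UNIV :: real set)" using roots by auto
    ultimately show False using infinite_UNIV_char_0 by metis
  qed
  then have "coeff g i = 0" by simp
  then show ?thesis using \<open>i \<le> k\<close> by (simp add: g_def coeff_sum)
qed

lemma fps_nth_centered_lmm_fps:
  assumes "degree f \<le> k"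
  shows "fps_nth (fps_exp (- (real k / 2)) * lmm_fps f) n
           = (\<Sum>i\<le>k. coeff f i * (real i - real k / 2) ^ n) / fact n"
proof -
  have "lmm_fps f = (\<Sum>i\<le>k. fps_const (coeff f i) * fps_exp (real i))"
    unfolding lmm_fps_def
    by (rule sum.mono_neutral_left) (use assms in \<open>auto simp: coeff_eq_0\<close>)
  moreover have "fps_exp (real i - real k / 2) = fps_exp (- (real k / 2)) * fps_exp (real i)" for i
    using fps_exp_add_mult[of "- (real k / 2)" "real i"] by simp
  ultimately have "fps_exp (- (real k / 2)) * lmm_fps f
      = (\<Sum>i\<le>k. fps_const (coeff f i) * fps_exp (real i - real k / 2))"
    by (simp add: sum_distrib_left mult.left_commute)
  then show ?thesis by (simp add: fps_sum_nth sum_divide_distrib)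
qed

lemma fps_nth_centered_lmm_fps_eq_0:
  fixes f :: "real poly"
  assumes deg: "degree f \<le> k"
    and reflect: "\<And>x. x \<noteq> 0 \<Longrightarrow> poly f x = s * x ^ k * poly f (1 / x)"
    and sign: "s * (-1) ^ n = -1"
  shows "fps_nth (fps_exp (- (real k / 2)) * lmm_fps f) n = 0"
proof -
  define S where "S = (\<Sum>i\<le>k. coeff f i * (real i - real k / 2) ^ n)"
  have "S = (\<Sum>i\<le>k. coeff f (k - i) * (real (k - i) - real k / 2) ^ n)"
    unfolding S_def by (rule sum.reindex_bij_witness[of _ "\<lambda>i. k - i" "\<lambda>i. k - i"]) auto
  also have "\<dots> = (\<Sum>i\<le>k. s * (-1) ^ n * (coeff f i * (real i - real k / 2) ^ n))"
  proof (intro sum.cong refl)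
    fix i assume "i \<in> {..k}"
    then have "coeff f (k - i) = s * coeff f i"
      using coeff_eq_of_poly_reflect[OF deg reflect, of "k - i"] by simp
    moreover have "(real (k - i) - real k / 2) ^ n = (-1) ^ n * (real i - real k / 2) ^ n"
    proof -
      have "real (k - i) - real k / 2 = - (real i - real k / 2)"
        using \<open>i \<in> {..k}\<close> by (simp add: of_nat_diff)
      then show ?thesis by (simp only: power_minus[of "real i - real k / 2", symmetric])
    qed
    ultimately show "coeff f (k - i) * (real (k - i) - real k / 2) ^ n
        = s * (-1) ^ n * (coeff f i * (real i - real k / 2) ^ n)"
      by simp
  qed
  also have "\<dots> = - S"
    by (simp add: S_def sign sum_negf)
  finally have "S = 0" by simp
  then show ?thesis by (simp add: fps_nth_centered_lmm_fps[OF deg] S_def)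
qed

lemma fps_nth_sum_const_X_power:
  assumes "finite J"
  shows "fps_nth (\<Sum>j\<in>J. fps_const (c j) * fps_X ^ (j + 1)) (Suc m) = (if m \<in> J then c m else 0)"
    and "fps_nth (\<Sum>j\<in>J. fps_const (c j) * fps_X ^ (j + 1)) 0 = 0"
  using assms by (simp_all add: fps_sum_nth if_distrib[of "\<lambda>x. _ * x"] cong: if_cong)

lemma fps_even_nth_eq_0_of_mult:
  fixes A P :: "'a::idom fps"
  assumes A0: "fps_nth A 0 \<noteq> 0" and A_odd: "\<And>i. odd i \<Longrightarrow> fps_nth A i = 0"
    and AP: "\<And>m. even m \<Longrightarrow> m \<le> N \<Longrightarrow> fps_nth (A * P) m = 0"
  shows "even n \<Longrightarrow> n \<le> N \<Longrightarrow> fps_nth P n = 0"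
proof (induction n rule: less_induct)
  case (less n)
  have "(\<Sum>i=1..n. fps_nth A i * fps_nth P (n - i)) = 0"
  proof (intro sum.neutral ballI)
    fix i assume i: "i \<in> {1..n}"
    show "fps_nth A i * fps_nth P (n - i) = 0"
    proof (cases "odd i")
      case False
      then have "fps_nth P (n - i) = 0" using less i by (intro less.IH) auto
      then show ?thesis by simp
    qed (simp add: A_odd)
  qed
  moreover have "fps_nth (A * P) n = fps_nth A 0 * fps_nth P n + (\<Sum>i=1..n. fps_nth A i * fps_nth P (n - i))"
    by (simp add: fps_mult_nth sum.atLeast_Suc_atMost)
  ultimately show ?case using AP[OF less.prems] A0 by simp
qed

lemma lmm_order_lte_constant_nonzero:
  assumes ord: "lmm_order \<rho> \<sigma> r" and lte: "lte_constants \<rho> \<sigma> r c" and "1 \<le> r"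
  shows "fps_nth (lmm_fps \<sigma>) 0 * c r \<noteq> 0"
proof -
  define P where "P = (\<Sum>j\<in>{r..<2*r}. fps_const (c j) * fps_X ^ (j + 1))"
  note P_nth = fps_nth_sum_const_X_power[of "{r..<2*r}" c, folded P_def, simplified]
  have "fps_nth (lmm_fps \<sigma> * P) (Suc r) = fps_nth (lmm_fps \<sigma>) 0 * c r"
  proof -
    have "fps_nth P (Suc r - i) = 0" if "i \<in> {1..Suc r}" for i
      using that P_nth by (cases "Suc r - i") auto
    then show ?thesis
      using P_nth \<open>1 \<le> r\<close> by (simp add: fps_mult_nth sum.atLeast_Suc_atMost)
  qed
  moreover have "fps_nth (lmm_fps \<rho> - fps_X * lmm_fps \<sigma> - lmm_fps \<sigma> * P) (Suc r) = 0"
  proof -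
    have "Suc r \<le> 2 * r" using \<open>1 \<le> r\<close> by simp
    then show ?thesis using lte unfolding lte_constants_def P_def by blast
  qed
  moreover have "fps_nth (lmm_fps \<rho> - fps_X * lmm_fps \<sigma>) (Suc r) \<noteq> 0"
    using ord unfolding lmm_order_def by simp
  ultimately show ?thesis by (simp only: fps_sub_nth)
qed

lemma symmetric_lmm_centered_parity:
  assumes lmm: "lmm \<rho> \<sigma>" and sym: "symmetric_lmm \<rho> \<sigma>"
  defines "e \<equiv> fps_exp (- (real (degree \<rho>) / 2))"
  shows "even n \<Longrightarrow> fps_nth (e * lmm_fps \<rho>) n = 0"
    and "odd n \<Longrightarrow> fps_nth (e * lmm_fps \<sigma>) n = 0"
proof -
  let ?k = "degree \<rho>"
  assume "even n"
  then show "fps_nth (e * lmm_fps \<rho>) n = 0"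
    unfolding e_def
  proof (intro fps_nth_centered_lmm_fps_eq_0[where s = "-1"])
    fix x :: real assume "x \<noteq> 0"
    then have "poly \<rho> x = - (x ^ ?k) * poly \<rho> (1 / x)"
      using sym unfolding symmetric_lmm_def by blast
    then show "poly \<rho> x = - 1 * x ^ ?k * poly \<rho> (1 / x)" by (simp only: mult_minus1)
  qed simp_all
next
  let ?k = "degree \<rho>"
  assume "odd n"
  then show "fps_nth (e * lmm_fps \<sigma>) n = 0"
    unfolding e_def
  proof (intro fps_nth_centered_lmm_fps_eq_0[where s = 1])
    show "degree \<sigma> \<le> ?k" using lmm by (simp add: lmm_def)
    fix x :: real assume "x \<noteq> 0"
    then have "poly \<sigma> x = x ^ ?k * poly \<sigma> (1 / x)"
      using sym unfolding symmetric_lmm_def by blast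
    then show "poly \<sigma> x = 1 * x ^ ?k * poly \<sigma> (1 / x)" by (simp only: mult_1)
  qed simp
qed

lemma symmetric_lmm_even_order_odd_constants:
  assumes lmm: "lmm \<rho> \<sigma>" and ord: "lmm_order \<rho> \<sigma> r" and sym: "symmetric_lmm \<rho> \<sigma>"
    and lte: "lte_constants \<rho> \<sigma> r c"
  shows "even r" and "\<And>j. j \<in> {r..<2*r} \<Longrightarrow> odd j \<Longrightarrow> c j = 0"
proof -
  define e where "e = fps_exp (- (real (degree \<rho>) / 2))"
  define P where "P = (\<Sum>j\<in>{r..<2*r}. fps_const (c j) * fps_X ^ (j + 1))"
  note e\<rho> = symmetric_lmm_centered_parity(1)[OF lmm sym, folded e_def]
  note e\<sigma> = symmetric_lmm_centered_parity(2)[OF lmm sym, folded e_def]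
  have e\<sigma>P: "fps_nth (e * lmm_fps \<sigma> * P) n = 0" if "even n" "n \<le> 2 * r" for n
  proof -
    define D where "D = lmm_fps \<rho> - fps_X * lmm_fps \<sigma> - lmm_fps \<sigma> * P"
    have "fps_nth D m = 0" if "m \<le> 2 * r" for m
      using lte that unfolding lte_constants_def D_def P_def by blast
    then have "fps_nth (e * D) n = 0"
      using \<open>n \<le> 2 * r\<close> unfolding fps_mult_nth by (intro sum.neutral) auto
    moreover have "fps_nth (fps_X * (e * lmm_fps \<sigma>)) n = 0"
      using e\<sigma>[of "n - 1"] \<open>even n\<close> by (cases n) auto
    moreover have "e * lmm_fps \<sigma> * P = e * lmm_fps \<rho> - fps_X * (e * lmm_fps \<sigma>) - e * D"
      by (simp add: D_def algebra_simps)
    ultimately show ?thesis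
      using e\<rho>[OF \<open>even n\<close>] by (simp only: fps_sub_nth)
  qed
  have c_odd: "c j = 0" if "j \<in> {r..<2*r}" "odd j" for j
  proof -
    have "fps_nth P (Suc j) = 0"
    proof (rule fps_even_nth_eq_0_of_mult[OF _ e\<sigma> e\<sigma>P])
      show "fps_nth (e * lmm_fps \<sigma>) 0 \<noteq> 0"
        using lmm_order_lte_constant_nonzero[OF ord lte] that by (simp add: e_def)
    qed (use that in auto)
    then show ?thesis
      using that fps_nth_sum_const_X_power(1)[of "{r..<2*r}" c j, folded P_def] by simp
  qed
  then show "\<And>j. j \<in> {r..<2*r} \<Longrightarrow> odd j \<Longrightarrow> c j = 0" .
  show "even r"
  proof (rule ccontr)
    assume "odd r"
    then have "0 < r" by (rule odd_pos)
    then show False using lmm_order_lte_constant_nonzero[OF ord lte] c_odd \<open>odd r\<close> by simp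
  qed
qed

section \<open>Partial derivatives in (p, q) coordinates\<close>

lemma continuous_on_compact_bound:
  fixes \<phi> :: "'a::topological_space \<Rightarrow> real"
  assumes "compact I" "continuous_on I \<phi>"
  obtains B where "\<And>s. s \<in> I \<Longrightarrow> \<phi> s \<le> B"
  using compact_imp_bounded[OF compact_continuous_image[OF assms(2,1)]]
  by (metis bounded_iff imageI real_norm_def abs_le_D1)

lemma dirderiv_eq_frechet_derivative:
  fixes F :: "'a::real_normed_vector \<Rightarrow> 'b::real_normed_vector"
  assumes "F differentiable (at x)"
  shows "dirderiv F v x = frechet_derivative F (at x) v"
proof -
  let ?L = "frechet_derivative F (at x)"
  have "(F has_derivative ?L) (at x)"
    using assms frechet_derivative_works by blast
  then have "(F has_derivative ?L) (at (x + 0 *\<^sub>R v))" by simp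
  moreover have "((\<lambda>s. x + s *\<^sub>R v) has_derivative (\<lambda>s. s *\<^sub>R v)) (at 0)"
    by (auto intro!: derivative_eq_intros)
  ultimately have "((\<lambda>s. F (x + s *\<^sub>R v)) has_derivative (\<lambda>s. ?L (s *\<^sub>R v))) (at 0)"
    using diff_chain_at[of "\<lambda>s. x + s *\<^sub>R v" _ 0 F] by (simp add: o_def)
  moreover have "linear ?L"
    using assms frechet_derivative_works has_derivative_linear by blast
  ultimately have "((\<lambda>s. F (x + s *\<^sub>R v)) has_vector_derivative ?L v) (at 0)"
    by (simp add: has_vector_derivative_def linear_cmul)
  then show ?thesis unfolding dirderiv_def by (rule vector_derivative_at)
qed

lemma dirderiv_uminus:
  fixes F :: "'a::real_normed_vector \<Rightarrow> 'b::real_normed_vector"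
  assumes "F differentiable (at x)"
  shows "dirderiv (\<lambda>y. - F y) v x = - dirderiv F v x"
proof -
  have "(\<lambda>y. - F y) differentiable (at x)" using assms by (rule differentiable_minus)
  moreover have "frechet_derivative (\<lambda>y. - F y) (at x) = (\<lambda>v. - frechet_derivative F (at x) v)"
    using assms frechet_derivative_works
    by (intro frechet_derivative_at[symmetric] has_derivative_minus) blast
  ultimately show ?thesis using assms by (simp add: dirderiv_eq_frechet_derivative)
qed

definition pq_derivative ::
    "((real^'d) \<times> (real^'d) \<Rightarrow> real) \<Rightarrow> (real^'d) \<times> (real^'d) \<Rightarrow> (real^'d) \<times> (real^'d) \<Rightarrow> real" where
  "pq_derivative f z \<delta> = (\<Sum>k\<in>UNIV. fst \<delta> $ k * dirderiv f (axis k 1, 0) z)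
                        + (\<Sum>k\<in>UNIV. snd \<delta> $ k * dirderiv f (0, axis k 1) z)"

lemma has_derivative_pq_derivative:
  fixes f :: "(real^'d) \<times> (real^'d) \<Rightarrow> real"
  assumes "f differentiable (at z)"
  shows "(f has_derivative pq_derivative f z) (at z)"
proof -
  let ?L = "frechet_derivative f (at z)"
  have deriv: "(f has_derivative ?L) (at z)" using assms frechet_derivative_works by blast
  then have lin: "linear ?L" by (rule has_derivative_linear)
  have scale_p: "?L (c *\<^sub>R u, 0) = c * ?L (u, 0)" and scale_q: "?L (0, c *\<^sub>R u) = c * ?L (0, u)"
    for c u
    using linear_cmul[OF lin, of c "(u, 0)"] linear_cmul[OF lin, of c "(0, u)"] by simp_all
  have "?L = pq_derivative f z"
  proof
    fix \<delta> :: "(real^'d) \<times> (real^'d)"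
    have "\<delta> = (\<Sum>k\<in>UNIV. fst \<delta> $ k *\<^sub>R (axis k 1, 0)) + (\<Sum>k\<in>UNIV. snd \<delta> $ k *\<^sub>R (0, axis k 1))"
      by (simp add: prod_eq_iff fst_sum snd_sum vec_eq_iff sum_component axis_def
          if_distrib[of "\<lambda>x. _ * x"] cong: if_cong)
    then have "?L \<delta> = ?L ((\<Sum>k\<in>UNIV. fst \<delta> $ k *\<^sub>R (axis k 1, 0)) + (\<Sum>k\<in>UNIV. snd \<delta> $ k *\<^sub>R (0, axis k 1)))"
      by (rule arg_cong)
    also have "\<dots> = pq_derivative f z \<delta>"
      by (simp add: linear_add[OF lin] linear_sum[OF lin] scale_p scale_q
          dirderiv_eq_frechet_derivative[OF assms] pq_derivative_def)
    finally show "?L \<delta> = pq_derivative f z \<delta>" .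
  qed
  with deriv show ?thesis by simp
qed

lemma pq_derivative_grad:
  "pq_derivative H z (u, w) = grad_p H z \<bullet> u + grad_q H z \<bullet> w"
  by (simp add: pq_derivative_def grad_p_def grad_q_def inner_vec_def mult.commute)

lemma has_real_derivative_comp_pq:
  fixes f :: "(real^'d) \<times> (real^'d) \<Rightarrow> real"
  assumes Y: "(Y has_vector_derivative Y') (at t)" and f: "f differentiable (at (Y t))"
  shows "((\<lambda>s. f (Y s)) has_real_derivative pq_derivative f (Y t) Y') (at t)"
proof -
  have "(Y has_derivative (\<lambda>s. s *\<^sub>R Y')) (at t)"
    using Y by (simp add: has_vector_derivative_def)
  then have "((f \<circ> Y) has_derivative (pq_derivative f (Y t) \<circ> (\<lambda>s. s *\<^sub>R Y'))) (at t)"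
    using diff_chain_at[of Y _ t f] has_derivative_pq_derivative[OF f] by blast
  moreover have "linear (pq_derivative f (Y t))"
    using has_derivative_linear[OF has_derivative_pq_derivative[OF f]] .
  moreover have "(\<lambda>x. x * pq_derivative f (Y t) Y') = (*) (pq_derivative f (Y t) Y')"
    by (simp add: fun_eq_iff)
  ultimately show ?thesis by (simp add: has_field_derivative_def o_def linear_cmul)
qed

definition pq_grad_l1 :: "((real^'d) \<times> (real^'d) \<Rightarrow> real) \<Rightarrow> (real^'d) \<times> (real^'d) \<Rightarrow> real" where
  "pq_grad_l1 f z = (\<Sum>k\<in>UNIV. \<bar>dirderiv f (axis k 1, 0) z\<bar>) + (\<Sum>k\<in>UNIV. \<bar>dirderiv f (0, axis k 1) z\<bar>)"

lemma abs_component_le_norm_pq: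
  fixes \<delta> :: "(real^'d) \<times> (real^'d)"
  shows "\<bar>fst \<delta> $ k\<bar> \<le> norm \<delta>" and "\<bar>snd \<delta> $ k\<bar> \<le> norm \<delta>"
  using component_le_norm_cart[of "fst \<delta>" k] component_le_norm_cart[of "snd \<delta>" k]
    norm_fst_le[of "fst \<delta>" "snd \<delta>"] norm_snd_le[of "snd \<delta>" "fst \<delta>"]
  by simp_all

lemma abs_pq_derivative_le: "\<bar>pq_derivative f z \<delta>\<bar> \<le> norm \<delta> * pq_grad_l1 f z"
proof -
  have "\<bar>pq_derivative f z \<delta>\<bar> \<le> (\<Sum>k\<in>UNIV. \<bar>fst \<delta> $ k * dirderiv f (axis k 1, 0) z\<bar>)
      + (\<Sum>k\<in>UNIV. \<bar>snd \<delta> $ k * dirderiv f (0, axis k 1) z\<bar>)"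
    unfolding pq_derivative_def by (rule order_trans[OF abs_triangle_ineq add_mono[OF sum_abs sum_abs]])
  also have "\<dots> \<le> (\<Sum>k\<in>UNIV. norm \<delta> * \<bar>dirderiv f (axis k 1, 0) z\<bar>)
      + (\<Sum>k\<in>UNIV. norm \<delta> * \<bar>dirderiv f (0, axis k 1) z\<bar>)"
    by (intro add_mono sum_mono) (auto simp: abs_mult intro!: mult_right_mono abs_component_le_norm_pq)
  finally show ?thesis by (simp add: pq_grad_l1_def sum_distrib_left distrib_left)
qed

definition pq_axes :: "((real^'d) \<times> (real^'d)) set" where
  "pq_axes = range (\<lambda>k. (axis k 1, 0)) \<union> range (\<lambda>k. (0, axis k 1))"

(* The third derivatives are used only to make the second partials continuous, hence bounded on compacts. *)
definition pq_thrice_differentiable :: "((real^'d) \<times> (real^'d) \<Rightarrow> real) \<Rightarrow> bool" where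
  "pq_thrice_differentiable \<phi> \<longleftrightarrow> (\<forall>x. \<phi> differentiable (at x)) \<and>
     (\<forall>v\<in>pq_axes. \<forall>x. dirderiv \<phi> v differentiable (at x)) \<and>
     (\<forall>v\<in>pq_axes. \<forall>w\<in>pq_axes. \<forall>x. dirderiv (dirderiv \<phi> v) w differentiable (at x))"

lemma axes_in_pq_axes: "(axis k 1, 0) \<in> pq_axes" "(0, axis k 1) \<in> pq_axes"
  by (auto simp: pq_axes_def)

definition pq_hessian_l1 :: "((real^'d) \<times> (real^'d) \<Rightarrow> real) \<Rightarrow> (real^'d) \<times> (real^'d) \<Rightarrow> real" where
  "pq_hessian_l1 \<phi> z = (\<Sum>k\<in>UNIV. pq_grad_l1 (dirderiv \<phi> (axis k 1, 0)) z)
                      + (\<Sum>k\<in>UNIV. pq_grad_l1 (dirderiv \<phi> (0, axis k 1)) z)"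

lemma continuous_on_pq_hessian_l1:
  assumes "pq_thrice_differentiable \<phi>"
  shows "continuous_on S (pq_hessian_l1 \<phi>)"
proof -
  have cont: "continuous_on S (dirderiv (dirderiv \<phi> v) w)" if "v \<in> pq_axes" "w \<in> pq_axes" for v w
    using assms that unfolding pq_thrice_differentiable_def
    by (meson continuous_at_imp_continuous_on differentiable_imp_continuous_within)
  then show ?thesis
    unfolding pq_hessian_l1_def pq_grad_l1_def by (intro continuous_intros cont axes_in_pq_axes)
qed

lemma has_real_derivative_pq_derivative_line:
  fixes \<phi> :: "(real^'d) \<times> (real^'d) \<Rightarrow> real" and y \<delta> :: "(real^'d) \<times> (real^'d)" and \<theta> :: real
  assumes "pq_thrice_differentiable \<phi>"
  defines "z \<equiv> y + \<theta> *\<^sub>R \<delta>"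
  shows "((\<lambda>\<theta>. pq_derivative \<phi> (y + \<theta> *\<^sub>R \<delta>) \<delta>) has_real_derivative
          (\<Sum>k\<in>UNIV. fst \<delta> $ k * pq_derivative (dirderiv \<phi> (axis k 1, 0)) z \<delta>)
        + (\<Sum>k\<in>UNIV. snd \<delta> $ k * pq_derivative (dirderiv \<phi> (0, axis k 1)) z \<delta>)) (at \<theta>)"
proof -
  have line: "((\<lambda>\<theta>. y + \<theta> *\<^sub>R \<delta>) has_vector_derivative \<delta>) (at \<theta>)"
    by (auto simp: has_vector_derivative_def intro!: derivative_eq_intros)
  have diff: "dirderiv \<phi> v differentiable (at x)" if "v \<in> pq_axes" for v x
    using assms that unfolding pq_thrice_differentiable_def by blast
  show ?thesis
    unfolding pq_derivative_def[of \<phi>] z_def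
    by (intro DERIV_add DERIV_sum DERIV_cmult has_real_derivative_comp_pq[OF line] diff axes_in_pq_axes)
qed

lemma abs_pq_second_derivative_le:
  "\<bar>(\<Sum>k\<in>UNIV. fst \<delta> $ k * pq_derivative (dirderiv \<phi> (axis k 1, 0)) z \<delta>)
    + (\<Sum>k\<in>UNIV. snd \<delta> $ k * pq_derivative (dirderiv \<phi> (0, axis k 1)) z \<delta>)\<bar>
     \<le> (norm \<delta>)\<^sup>2 * pq_hessian_l1 \<phi> z"
proof -
  have summand_le: "\<bar>c * pq_derivative f z \<delta>\<bar> \<le> (norm \<delta>)\<^sup>2 * pq_grad_l1 f z" if "\<bar>c\<bar> \<le> norm \<delta>" for c f
  proof -
    have "\<bar>c * pq_derivative f z \<delta>\<bar> \<le> norm \<delta> * (norm \<delta> * pq_grad_l1 f z)"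
      unfolding abs_mult using that abs_pq_derivative_le by (rule mult_mono) auto
    then show ?thesis by (simp add: power2_eq_square)
  qed
  have "\<bar>(\<Sum>k\<in>UNIV. fst \<delta> $ k * pq_derivative (dirderiv \<phi> (axis k 1, 0)) z \<delta>)
    + (\<Sum>k\<in>UNIV. snd \<delta> $ k * pq_derivative (dirderiv \<phi> (0, axis k 1)) z \<delta>)\<bar>
     \<le> (\<Sum>k\<in>UNIV. \<bar>fst \<delta> $ k * pq_derivative (dirderiv \<phi> (axis k 1, 0)) z \<delta>\<bar>)
       + (\<Sum>k\<in>UNIV. \<bar>snd \<delta> $ k * pq_derivative (dirderiv \<phi> (0, axis k 1)) z \<delta>\<bar>)"
    by (rule order_trans[OF abs_triangle_ineq add_mono[OF sum_abs sum_abs]])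
  also have "\<dots> \<le> (\<Sum>k\<in>UNIV. (norm \<delta>)\<^sup>2 * pq_grad_l1 (dirderiv \<phi> (axis k 1, 0)) z)
       + (\<Sum>k\<in>UNIV. (norm \<delta>)\<^sup>2 * pq_grad_l1 (dirderiv \<phi> (0, axis k 1)) z)"
    by (intro add_mono sum_mono summand_le abs_component_le_norm_pq)
  finally show ?thesis by (simp add: pq_hessian_l1_def sum_distrib_left distrib_left)
qed

lemma pq_taylor_remainder_bound:
  fixes \<phi> :: "(real^'d) \<times> (real^'d) \<Rightarrow> real"
  assumes \<phi>: "pq_thrice_differentiable \<phi>" and "compact K"
  obtains M where "\<And>y \<delta>. y \<in> K \<Longrightarrow> norm \<delta> \<le> 1 \<Longrightarrow>
      \<bar>\<phi> (y + \<delta>) - \<phi> y - pq_derivative \<phi> y \<delta>\<bar> \<le> M * (norm \<delta>)\<^sup>2"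
proof -
  define K' where "K' = {a + b |a b. a \<in> K \<and> b \<in> cball 0 1}"
  have "compact K'"
    unfolding K'_def using \<open>compact K\<close> by (intro compact_sums compact_cball)
  then obtain M where M: "\<And>z. z \<in> K' \<Longrightarrow> pq_hessian_l1 \<phi> z \<le> M"
    using continuous_on_compact_bound continuous_on_pq_hessian_l1[OF \<phi>] by blast
  have "\<bar>\<phi> (y + \<delta>) - \<phi> y - pq_derivative \<phi> y \<delta>\<bar> \<le> M * (norm \<delta>)\<^sup>2"
    if "y \<in> K" "norm \<delta> \<le> 1" for y \<delta>
  proof -
    define g where "g \<theta> = pq_derivative \<phi> (y + \<theta> *\<^sub>R \<delta>) \<delta>" for \<theta>
    define g' where "g' \<theta> = (\<Sum>k\<in>UNIV. fst \<delta> $ k * pq_derivative (dirderiv \<phi> (axis k 1, 0)) (y + \<theta> *\<^sub>R \<delta>) \<delta>)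
        + (\<Sum>k\<in>UNIV. snd \<delta> $ k * pq_derivative (dirderiv \<phi> (0, axis k 1)) (y + \<theta> *\<^sub>R \<delta>) \<delta>)" for \<theta>
    have line: "((\<lambda>\<theta>. y + \<theta> *\<^sub>R \<delta>) has_vector_derivative \<delta>) (at \<theta>)" for \<theta>
      by (auto simp: has_vector_derivative_def intro!: derivative_eq_intros)
    have "((\<lambda>\<theta>. \<phi> (y + \<theta> *\<^sub>R \<delta>)) has_real_derivative g \<theta>) (at \<theta>)" for \<theta>
      unfolding g_def using \<phi> unfolding pq_thrice_differentiable_def
      by (intro has_real_derivative_comp_pq[OF line]) blast
    then obtain \<xi> where \<xi>: "0 < \<xi>" "\<xi> < 1" "\<phi> (y + \<delta>) - \<phi> y = g \<xi>"
      using MVT2[of 0 1 "\<lambda>\<theta>. \<phi> (y + \<theta> *\<^sub>R \<delta>)" g] by auto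
    obtain \<eta> where \<eta>: "0 < \<eta>" "\<eta> < \<xi>" "g \<xi> - g 0 = \<xi> * g' \<eta>"
      using MVT2[of 0 \<xi> g g'] \<xi>(1) has_real_derivative_pq_derivative_line[OF \<phi>]
      unfolding g_def g'_def by auto
    have "y + \<eta> *\<^sub>R \<delta> \<in> K'"
    proof -
      have "norm (\<eta> *\<^sub>R \<delta>) \<le> 1" using \<eta> \<xi> \<open>norm \<delta> \<le> 1\<close> by (simp add: mult_le_one)
      then have "\<eta> *\<^sub>R \<delta> \<in> cball 0 1" by simp
      then show ?thesis unfolding K'_def using \<open>y \<in> K\<close> by blast
    qed
    then have "(norm \<delta>)\<^sup>2 * pq_hessian_l1 \<phi> (y + \<eta> *\<^sub>R \<delta>) \<le> (norm \<delta>)\<^sup>2 * M"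
      using M by (simp add: mult_left_mono)
    then have "\<bar>g' \<eta>\<bar> \<le> (norm \<delta>)\<^sup>2 * M"
      using abs_pq_second_derivative_le unfolding g'_def by (rule order_trans[rotated])
    moreover have "\<bar>g \<xi> - g 0\<bar> \<le> \<bar>g' \<eta>\<bar>"
      using \<eta> \<xi> by (simp add: abs_mult mult_left_le_one_le)
    ultimately show ?thesis using \<xi>(3) by (simp add: g_def mult.commute)
  qed
  then show ?thesis using that by blast
qed

lemma pq_axes_subset_Basis: "pq_axes \<subseteq> (Basis :: ((real^'d) \<times> (real^'d)) set)"
  unfolding pq_axes_def Basis_prod_def by auto

lemma smooth_imp_pq_thrice_differentiable_dirderiv:
  fixes H :: "(real^'d) \<times> (real^'d) \<Rightarrow> real"
  assumes H: "smooth H" and v: "v \<in> pq_axes"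
  shows "pq_thrice_differentiable (dirderiv H v)"
proof -
  have "iter_dirderiv H vs differentiable (at x)" if "set vs \<subseteq> pq_axes" for vs x
    using H that pq_axes_subset_Basis unfolding smooth_def by blast
  from this[of "[v]"] this[of "[w, v]" for w] this[of "[u, w, v]" for u w] show ?thesis
    using v unfolding pq_thrice_differentiable_def by simp
qed

lemma pq_thrice_differentiable_uminus:
  assumes \<phi>: "pq_thrice_differentiable \<phi>"
  shows "pq_thrice_differentiable (\<lambda>x. - \<phi> x)"
proof -
  have d0: "\<phi> differentiable (at x)" for x
    using \<phi> unfolding pq_thrice_differentiable_def by blast
  have d1: "dirderiv \<phi> v differentiable (at x)" if "v \<in> pq_axes" for v x
    using \<phi> that unfolding pq_thrice_differentiable_def by blast
  have "dirderiv (\<lambda>x. - \<phi> x) v = (\<lambda>x. - dirderiv \<phi> v x)" for v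
    using dirderiv_uminus[OF d0] by blast
  moreover have "dirderiv (\<lambda>x. - dirderiv \<phi> v x) w = (\<lambda>x. - dirderiv (dirderiv \<phi> v) w x)"
    if "v \<in> pq_axes" for v w
    using dirderiv_uminus[OF d1[OF that]] by blast
  ultimately show ?thesis
    using \<phi> unfolding pq_thrice_differentiable_def by (auto intro!: differentiable_minus)
qed

lemma smooth_imp_pq_thrice_differentiable_grad:
  fixes H :: "(real^'d) \<times> (real^'d) \<Rightarrow> real"
  assumes "smooth H"
  shows "pq_thrice_differentiable (\<lambda>x. grad_p H x $ i)"
    and "pq_thrice_differentiable (\<lambda>x. (- grad_q H x) $ i)"
proof -
  have "(\<lambda>x. grad_p H x $ i) = dirderiv H (axis i 1, 0)"
    by (simp add: grad_p_def fun_eq_iff)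
  then show "pq_thrice_differentiable (\<lambda>x. grad_p H x $ i)"
    using smooth_imp_pq_thrice_differentiable_dirderiv[OF assms axes_in_pq_axes(1)] by simp
  have "(\<lambda>x. (- grad_q H x) $ i) = (\<lambda>x. - dirderiv H (0, axis i 1) x)"
    by (simp add: grad_q_def fun_eq_iff)
  then show "pq_thrice_differentiable (\<lambda>x. (- grad_q H x) $ i)"
    using pq_thrice_differentiable_uminus[OF
        smooth_imp_pq_thrice_differentiable_dirderiv[OF assms axes_in_pq_axes(2)]] by simp
qed

definition jac_apply ::
    "((real^'d) \<times> (real^'d) \<Rightarrow> real^'d) \<Rightarrow> (real^'d) \<times> (real^'d) \<Rightarrow> (real^'d) \<times> (real^'d) \<Rightarrow> real^'d" where
  "jac_apply F z \<delta> = jac_p F z *v fst \<delta> + jac_q F z *v snd \<delta>"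

lemma pq_derivative_component: "pq_derivative (\<lambda>x. F x $ i) z \<delta> = jac_apply F z \<delta> $ i"
  by (simp add: pq_derivative_def jac_apply_def jac_p_def jac_q_def matrix_vector_mult_def mult.commute)

lemma norm_le_of_component_bound:
  fixes x :: "real^'n"
  assumes "\<And>i. \<bar>x $ i\<bar> \<le> c"
  shows "norm x \<le> real CARD('n) * c"
proof -
  have "norm x \<le> (\<Sum>i\<in>UNIV. \<bar>x $ i\<bar>)" by (rule norm_le_l1_cart)
  also have "\<dots> \<le> real CARD('n) * c" using assms sum_bounded_above[of UNIV "\<lambda>i. \<bar>x $ i\<bar>" c] by simp
  finally show ?thesis .
qed

lemma jac_apply_taylor_bound:
  fixes F :: "(real^'d) \<times> (real^'d) \<Rightarrow> real^'d"
  assumes F: "\<And>i. pq_thrice_differentiable (\<lambda>x. F x $ i)" and "compact K"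
  obtains M where "\<And>y \<delta>. y \<in> K \<Longrightarrow> norm \<delta> \<le> 1 \<Longrightarrow>
      norm (F (y + \<delta>) - F y - jac_apply F y \<delta>) \<le> M * (norm \<delta>)\<^sup>2"
proof -
  have "\<forall>i. \<exists>M. \<forall>y\<in>K. \<forall>\<delta>. norm \<delta> \<le> 1 \<longrightarrow>
      \<bar>F (y + \<delta>) $ i - F y $ i - jac_apply F y \<delta> $ i\<bar> \<le> M * (norm \<delta>)\<^sup>2"
    using pq_taylor_remainder_bound[OF F \<open>compact K\<close>] unfolding pq_derivative_component by metis
  then obtain M where M: "\<And>i y \<delta>. y \<in> K \<Longrightarrow> norm \<delta> \<le> 1 \<Longrightarrow>
      \<bar>F (y + \<delta>) $ i - F y $ i - jac_apply F y \<delta> $ i\<bar> \<le> M i * (norm \<delta>)\<^sup>2"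
    by metis
  have "norm (F (y + \<delta>) - F y - jac_apply F y \<delta>) \<le> (real CARD('d) * (\<Sum>i\<in>UNIV. \<bar>M i\<bar>)) * (norm \<delta>)\<^sup>2"
    if "y \<in> K" "norm \<delta> \<le> 1" for y \<delta>
  proof -
    have "\<bar>(F (y + \<delta>) - F y - jac_apply F y \<delta>) $ i\<bar> \<le> (\<Sum>i\<in>UNIV. \<bar>M i\<bar>) * (norm \<delta>)\<^sup>2" for i
    proof -
      have "\<bar>M i\<bar> \<le> (\<Sum>i\<in>UNIV. \<bar>M i\<bar>)" by (rule member_le_sum) auto
      then have "M i * (norm \<delta>)\<^sup>2 \<le> (\<Sum>i\<in>UNIV. \<bar>M i\<bar>) * (norm \<delta>)\<^sup>2"
        by (intro mult_right_mono) auto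
      then show ?thesis using M[OF that, of i] by simp
    qed
    then have "norm (F (y + \<delta>) - F y - jac_apply F y \<delta>) \<le> real CARD('d) * ((\<Sum>i\<in>UNIV. \<bar>M i\<bar>) * (norm \<delta>)\<^sup>2)"
      by (rule norm_le_of_component_bound)
    then show ?thesis by (simp add: mult.assoc)
  qed
  then show ?thesis using that by blast
qed

lemma jac_apply_bound:
  fixes F :: "(real^'d) \<times> (real^'d) \<Rightarrow> real^'d"
  assumes F: "\<And>i. pq_thrice_differentiable (\<lambda>x. F x $ i)" and "compact K"
  obtains \<Lambda> where "\<And>y \<delta>. y \<in> K \<Longrightarrow> norm (jac_apply F y \<delta>) \<le> \<Lambda> * norm \<delta>"
proof -
  have "continuous_on K (pq_grad_l1 (\<lambda>x. F x $ i))" for i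
  proof -
    have cont: "continuous_on K (dirderiv (\<lambda>x. F x $ i) v)" if "v \<in> pq_axes" for v
      using F[of i] that unfolding pq_thrice_differentiable_def
      by (meson continuous_at_imp_continuous_on differentiable_imp_continuous_within)
    show ?thesis unfolding pq_grad_l1_def by (intro continuous_intros cont axes_in_pq_axes)
  qed
  then have "\<forall>i. \<exists>B. \<forall>y\<in>K. pq_grad_l1 (\<lambda>x. F x $ i) y \<le> B"
    using continuous_on_compact_bound[OF \<open>compact K\<close>] by metis
  then obtain B where B: "\<And>i y. y \<in> K \<Longrightarrow> pq_grad_l1 (\<lambda>x. F x $ i) y \<le> B i"
    by metis
  have "norm (jac_apply F y \<delta>) \<le> (real CARD('d) * (\<Sum>i\<in>UNIV. \<bar>B i\<bar>)) * norm \<delta>"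
    if "y \<in> K" for y \<delta>
  proof -
    have "\<bar>jac_apply F y \<delta> $ i\<bar> \<le> (\<Sum>i\<in>UNIV. \<bar>B i\<bar>) * norm \<delta>" for i
    proof -
      have "\<bar>jac_apply F y \<delta> $ i\<bar> \<le> norm \<delta> * pq_grad_l1 (\<lambda>x. F x $ i) y"
        using abs_pq_derivative_le[of "\<lambda>x. F x $ i" y \<delta>] unfolding pq_derivative_component .
      also have "\<dots> \<le> norm \<delta> * (\<Sum>i\<in>UNIV. \<bar>B i\<bar>)"
        using B[OF that, of i] member_le_sum[of i UNIV "\<lambda>i. \<bar>B i\<bar>"]
        by (intro mult_left_mono) auto
      finally show ?thesis by (simp add: mult.commute)
    qed
    then have "norm (jac_apply F y \<delta>) \<le> real CARD('d) * ((\<Sum>i\<in>UNIV. \<bar>B i\<bar>) * norm \<delta>)"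
      by (rule norm_le_of_component_bound)
    then show ?thesis by (simp add: mult.assoc)
  qed
  then show ?thesis using that by blast
qed

section \<open>Energy along the smooth part of the numerical solution\<close>

lemma has_real_derivative_inner:
  fixes f g :: "real \<Rightarrow> 'a::real_inner"
  assumes "(f has_vector_derivative f') (at s)" "(g has_vector_derivative g') (at s)"
  shows "((\<lambda>s. f s \<bullet> g s) has_real_derivative (f' \<bullet> g s + f s \<bullet> g')) (at s)"
  using bounded_bilinear.has_vector_derivative[OF bounded_bilinear_inner assms]
  by (simp add: has_real_derivative_iff_has_vector_derivative add.commute)

lemma alternating_sum_telescope:
  fixes X :: "nat \<Rightarrow> nat \<Rightarrow> real"
  assumes "k \<le> m"
  shows "(\<Sum>l=1..k. (-1) ^ (l+1) * (X (l+1) (m-l) + X l (m+1-l))) = X 1 m + (-1) ^ (k+1) * X (k+1) (m-k)"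
  using assms
proof (induction k)
  case (Suc k)
  have "m + 1 - Suc k = m - k" using Suc.prems by simp
  with Suc show ?case by (simp add: algebra_simps)
qed simp

(* Repeated integration by parts: under differentiation the alternating sum telescopes. *)
lemma has_real_derivative_alternating_inner_sum:
  fixes a b :: "nat \<Rightarrow> real \<Rightarrow> 'a::real_inner"
  assumes a: "\<And>n. (a n has_vector_derivative a (Suc n) s) (at s)"
    and b: "\<And>n. (b n has_vector_derivative b (Suc n) s) (at s)"
  shows "((\<lambda>s. \<Sum>l=1..k. (-1) ^ (l+1) * (a l s \<bullet> b (2*k+1-l) s - c l)) has_real_derivative
           a 1 s \<bullet> b (2*k+1) s + (-1) ^ (k+1) * (a (k+1) s \<bullet> b (k+1) s)) (at s)"
proof -
  have "((\<lambda>s. \<Sum>l=1..k. (-1) ^ (l+1) * (a l s \<bullet> b (2*k+1-l) s - c l)) has_real_derivative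
      (\<Sum>l=1..k. (-1) ^ (l+1) * ((a (Suc l) s \<bullet> b (2*k+1-l) s + a l s \<bullet> b (Suc (2*k+1-l)) s) - 0))) (at s)"
    by (intro DERIV_sum DERIV_cmult DERIV_diff DERIV_const has_real_derivative_inner a b)
  also have "(\<Sum>l=1..k. (-1) ^ (l+1) * ((a (Suc l) s \<bullet> b (2*k+1-l) s + a l s \<bullet> b (Suc (2*k+1-l)) s) - 0))
      = (\<Sum>l=1..k. (-1) ^ (l+1) * (a (l+1) s \<bullet> b ((2*k+1)-l) s + a l s \<bullet> b ((2*k+1)+1-l) s))"
    by (intro sum.cong refl) (auto simp: Suc_diff_le)
  also have "\<dots> = a 1 s \<bullet> b (2*k+1) s + (-1) ^ (k+1) * (a (k+1) s \<bullet> b (2*k+1-k) s)"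
    by (rule alternating_sum_telescope[where X = "\<lambda>l m. a l s \<bullet> b m s"]) simp
  finally show ?thesis by (simp add: Suc_diff_le)
qed

lemma sum_even_reindex:
  fixes g :: "nat \<Rightarrow> 'a::comm_monoid_add"
  assumes "even r" and odd_0: "\<And>j. j \<in> {r..<2*r} \<Longrightarrow> odd j \<Longrightarrow> g j = 0"
  shows "(\<Sum>j\<in>{r..<2*r}. g j) = (\<Sum>k\<in>{r div 2..<r}. g (2 * k))"
proof -
  have "{j \<in> {r..<2*r}. even j} \<subseteq> (\<lambda>k. 2 * k) ` {r div 2..<r}"
  proof
    fix j assume j: "j \<in> {j \<in> {r..<2*r}. even j}"
    then have "j = 2 * (j div 2)" and "j div 2 \<in> {r div 2..<r}" using \<open>even r\<close> by auto
    then show "j \<in> (\<lambda>k. 2 * k) ` {r div 2..<r}" by blast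
  qed
  moreover have "(\<lambda>k. 2 * k) ` {r div 2..<r} \<subseteq> {j \<in> {r..<2*r}. even j}"
    using \<open>even r\<close> by auto
  ultimately have image: "(\<lambda>k. 2 * k) ` {r div 2..<r} = {j \<in> {r..<2*r}. even j}" by blast
  have "(\<Sum>k\<in>{r div 2..<r}. g (2 * k)) = sum g ((\<lambda>k. 2 * k) ` {r div 2..<r})"
    by (simp add: sum.reindex inj_on_def)
  also have "\<dots> = sum g {j \<in> {r..<2*r}. even j}" by (simp only: image)
  also have "\<dots> = sum g {r..<2*r}"
    by (rule sum.mono_neutral_left) (auto intro: odd_0)
  finally show ?thesis by simp
qed

lemma norm_sum_power_scaleR_le:
  fixes v :: "nat \<Rightarrow> 'a::real_normed_vector"
  assumes "0 < h" "h \<le> 1" and "\<And>j. j \<in> J \<Longrightarrow> r \<le> j"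
  shows "norm (\<Sum>j\<in>J. h ^ j *\<^sub>R v j) \<le> h ^ r * (\<Sum>j\<in>J. norm (v j))"
proof -
  have "norm (\<Sum>j\<in>J. h ^ j *\<^sub>R v j) \<le> (\<Sum>j\<in>J. norm (h ^ j *\<^sub>R v j))" by (rule norm_sum)
  also have "\<dots> \<le> (\<Sum>j\<in>J. h ^ r * norm (v j))"
  proof (rule sum_mono)
    fix j assume "j \<in> J"
    then have "h ^ j \<le> h ^ r" using assms by (intro power_decreasing) auto
    then show "norm (h ^ j *\<^sub>R v j) \<le> h ^ r * norm (v j)" using assms by (simp add: mult_right_mono)
  qed
  finally show ?thesis by (simp add: sum_distrib_left)
qed

(* The terms linear in the perturbation cancel because (u, v) \<mapsto> u\<^sub>q \<bullet> v\<^sub>p - u\<^sub>p \<bullet> v\<^sub>q is antisymmetric. *)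
lemma symplectic_cancellation:
  fixes Fp Fq Lp Lq Rp Rq Wp Wq :: "'a::real_inner"
  shows "(Fq + Lq + Rq) \<bullet> (Fp + Lp - Wp) - (Fp + Lp + Rp) \<bullet> (Fq + Lq - Wq)
     = - (Fq \<bullet> Wp) + Fp \<bullet> Wq - Lq \<bullet> Wp + Lp \<bullet> Wq + Rq \<bullet> (Fp + Lp - Wp) - Rp \<bullet> (Fq + Lq - Wq)"
  by (simp add: inner_add_left inner_add_right inner_diff_left inner_diff_right inner_commute
      algebra_simps)

lemma abs_energy_defect_le:
  fixes Lf Lg Wp Wq Rf Rg Vp Vq :: "'a::real_inner"
  assumes "norm Lf \<le> e * \<Lambda>" "norm Lg \<le> e * \<Lambda>" "norm Wp \<le> e * \<omega>" "norm Wq \<le> e * \<omega>"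
    and "norm Rf \<le> e * e * \<mu>" "norm Rg \<le> e * e * \<mu>" "norm Vp \<le> V" "norm Vq \<le> V"
  shows "\<bar>- (Lg \<bullet> Wp) + Lf \<bullet> Wq + Rg \<bullet> Vp - Rf \<bullet> Vq\<bar> \<le> e * e * (2 * \<Lambda> * \<omega> + 2 * \<mu> * V)"
proof -
  have inner_le: "\<bar>x \<bullet> y\<bar> \<le> A * B" if "norm x \<le> A" "norm y \<le> B" for x y :: 'a and A B
    using Cauchy_Schwarz_ineq2[of x y] that by (meson mult_mono' norm_ge_zero order_trans)
  have "\<bar>- (Lg \<bullet> Wp) + Lf \<bullet> Wq + Rg \<bullet> Vp - Rf \<bullet> Vq\<bar> \<le> \<bar>Lg \<bullet> Wp\<bar> + \<bar>Lf \<bullet> Wq\<bar> + \<bar>Rg \<bullet> Vp\<bar> + \<bar>Rf \<bullet> Vq\<bar>"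
    by linarith
  also have "\<dots> \<le> (e * \<Lambda>) * (e * \<omega>) + (e * \<Lambda>) * (e * \<omega>) + (e * e * \<mu>) * V + (e * e * \<mu>) * V"
    using assms by (intro add_mono inner_le)
  also have "\<dots> = e * e * (2 * \<Lambda> * \<omega> + 2 * \<mu> * V)" by (simp add: algebra_simps)
  finally show ?thesis .
qed

(* The method enters only through the parity facts of the first section. *)
locale hamiltonian_smooth_part =
  fixes H :: "(real^'d) \<times> (real^'d) \<Rightarrow> real"
    and p q :: "real \<Rightarrow> real^'d"
    and a b :: real
    and r :: nat
    and cp cq :: "nat \<Rightarrow> real"
    and ep eq :: "nat \<Rightarrow> real \<Rightarrow> real^'d"
  assumes H_smooth: "smooth H"
    and p_smooth: "smooth_on_real {a<..<b} p"
    and q_smooth: "smooth_on_real {a<..<b} q"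
    and p_ode: "\<And>t. t \<in> {a<..<b} \<Longrightarrow> (p has_vector_derivative (- grad_q H (p t, q t))) (at t)"
    and q_ode: "\<And>t. t \<in> {a<..<b} \<Longrightarrow> (q has_vector_derivative (grad_p H (p t, q t))) (at t)"
    and e_ode: "\<And>j t. j \<in> {r..<2*r} \<Longrightarrow> t \<in> {a<..<b} \<Longrightarrow>
        ((\<lambda>s. (ep j s, eq j s)) has_vector_derivative
          (jac_p (\<lambda>x. - grad_q H x) (p t, q t) *v ep j t
             + jac_q (\<lambda>x. - grad_q H x) (p t, q t) *v eq j t - cp j *\<^sub>R vderiv_n (j + 1) p t,
           jac_p (\<lambda>x. grad_p H x) (p t, q t) *v ep j t
             + jac_q (\<lambda>x. grad_p H x) (p t, q t) *v eq j t - cq j *\<^sub>R vderiv_n (j + 1) q t)) (at t)"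
    and r_even: "even r"
    and cp_odd: "\<And>j. j \<in> {r..<2*r} \<Longrightarrow> odd j \<Longrightarrow> cp j = 0"
    and cq_odd: "\<And>j. j \<in> {r..<2*r} \<Longrightarrow> odd j \<Longrightarrow> cq j = 0"
begin

abbreviation f :: "(real^'d) \<times> (real^'d) \<Rightarrow> real^'d" where "f \<equiv> \<lambda>x. - grad_q H x"

abbreviation g :: "(real^'d) \<times> (real^'d) \<Rightarrow> real^'d" where "g \<equiv> \<lambda>x. grad_p H x"

definition dp :: "real \<Rightarrow> real \<Rightarrow> real^'d" where
  "dp h s = (\<Sum>j\<in>{r..<2*r}. h ^ j *\<^sub>R ep j s)"

definition dq :: "real \<Rightarrow> real \<Rightarrow> real^'d" where
  "dq h s = (\<Sum>j\<in>{r..<2*r}. h ^ j *\<^sub>R eq j s)"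

definition wp :: "real \<Rightarrow> real \<Rightarrow> real^'d" where
  "wp h s = (\<Sum>j\<in>{r..<2*r}. h ^ j *\<^sub>R (cp j *\<^sub>R vderiv_n (j + 1) p s))"

definition wq :: "real \<Rightarrow> real \<Rightarrow> real^'d" where
  "wq h s = (\<Sum>j\<in>{r..<2*r}. h ^ j *\<^sub>R (cq j *\<^sub>R vderiv_n (j + 1) q s))"

definition lin :: "((real^'d) \<times> (real^'d) \<Rightarrow> real^'d) \<Rightarrow> real \<Rightarrow> real \<Rightarrow> real^'d" where
  "lin F h s = jac_apply F (p s, q s) (dp h s, dq h s)"

definition rem :: "((real^'d) \<times> (real^'d) \<Rightarrow> real^'d) \<Rightarrow> real \<Rightarrow> real \<Rightarrow> real^'d" where
  "rem F h s = F (p s + dp h s, q s + dq h s) - F (p s, q s) - lin F h s"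

(* What remains of the derivative of H along the smooth part once correction_deriv is removed;
   each term is O(h\<^sup>2\<^sup>r): a product of two O(h\<^sup>r) factors or a Taylor remainder times a velocity. *)
definition energy_defect :: "real \<Rightarrow> real \<Rightarrow> real" where
  "energy_defect h s = - (lin g h s \<bullet> wp h s) + lin f h s \<bullet> wq h s
     + rem g h s \<bullet> (f (p s, q s) + lin f h s - wp h s) - rem f h s \<bullet> (g (p s, q s) + lin g h s - wq h s)"

definition correction_deriv :: "real \<Rightarrow> real \<Rightarrow> real" where
  "correction_deriv h s = (\<Sum>k\<in>{r div 2..<r}. h ^ (2*k) *
     (cq (2*k) * (vderiv_n 1 p s \<bullet> vderiv_n (2*k+1) q s) - cp (2*k) * (vderiv_n 1 q s \<bullet> vderiv_n (2*k+1) p s)))"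

definition correction :: "real \<Rightarrow> real \<Rightarrow> real \<Rightarrow> real" where
  "correction h t0 t = (\<Sum>k\<in>{r div 2..<r}. h ^ (2*k) *
       (cq (2*k) * (\<Sum>l=1..k. (-1) ^ (l+1) *
            (vderiv_n l p t \<bullet> vderiv_n (2*k+1-l) q t - vderiv_n l p t0 \<bullet> vderiv_n (2*k+1-l) q t0))
      - cp (2*k) * (\<Sum>l=1..k. (-1) ^ (l+1) *
            (vderiv_n l q t \<bullet> vderiv_n (2*k+1-l) p t - vderiv_n l q t0 \<bullet> vderiv_n (2*k+1-l) p t0))))
     + (\<Sum>k\<in>{r div 2..<r}. h ^ (2*k) * (-1) ^ (k+2) * (cq (2*k) - cp (2*k)) *
          integral {t0..t} (\<lambda>s. vderiv_n (k+1) p s \<bullet> vderiv_n (k+1) q s))"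

lemma vderiv_has_vector_derivative:
  assumes "s \<in> {a<..<b}"
  shows "(vderiv_n n p has_vector_derivative vderiv_n (Suc n) p s) (at s)"
    and "(vderiv_n n q has_vector_derivative vderiv_n (Suc n) q s) (at s)"
  using assms p_smooth q_smooth unfolding smooth_on_real_def
  by (simp_all add: vector_derivative_works[symmetric])

lemma vderiv_continuous:
  assumes "s \<in> {a<..<b}"
  shows "isCont (vderiv_n n p) s" and "isCont (vderiv_n n q) s"
  using vderiv_has_vector_derivative[OF assms] by (auto intro: has_vector_derivative_continuous)

lemma vderiv_1_eq_field:
  assumes "s \<in> {a<..<b}"
  shows "vderiv_n 1 p s = f (p s, q s)" and "vderiv_n 1 q s = g (p s, q s)"
  using vector_derivative_at[OF p_ode[OF assms]] vector_derivative_at[OF q_ode[OF assms]] by simp_all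

lemma e_has_vector_derivative:
  assumes "j \<in> {r..<2*r}" "s \<in> {a<..<b}"
  shows "(ep j has_vector_derivative jac_apply f (p s, q s) (ep j s, eq j s) - cp j *\<^sub>R vderiv_n (j + 1) p s) (at s)"
    and "(eq j has_vector_derivative jac_apply g (p s, q s) (ep j s, eq j s) - cq j *\<^sub>R vderiv_n (j + 1) q s) (at s)"
  using bounded_linear.has_vector_derivative[OF bounded_linear_fst e_ode[OF assms]]
    bounded_linear.has_vector_derivative[OF bounded_linear_snd e_ode[OF assms]]
  by (simp_all add: jac_apply_def)

lemma jac_apply_perturbation:
  "jac_apply F z (dp h s, dq h s) = (\<Sum>j\<in>{r..<2*r}. h ^ j *\<^sub>R jac_apply F z (ep j s, eq j s))"
  by (simp add: jac_apply_def dp_def dq_def linear_sum[OF matrix_vector_mul_linear]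
      linear_cmul[OF matrix_vector_mul_linear] scaleR_add_right sum.distrib)

lemma smooth_part_has_vector_derivative:
  assumes "s \<in> {a<..<b}"
  shows "((\<lambda>s. p s + dp h s) has_vector_derivative f (p s, q s) + lin f h s - wp h s) (at s)"
    and "((\<lambda>s. q s + dq h s) has_vector_derivative g (p s, q s) + lin g h s - wq h s) (at s)"
proof -
  have eq_p: "f (p s, q s) + (\<Sum>j\<in>{r..<2*r}. h ^ j *\<^sub>R (jac_apply f (p s, q s) (ep j s, eq j s)
        - cp j *\<^sub>R vderiv_n (j + 1) p s)) = f (p s, q s) + lin f h s - wp h s"
    by (simp add: lin_def wp_def jac_apply_perturbation scaleR_right_diff_distrib sum_subtractf)
  have "((\<lambda>s. p s + dp h s) has_vector_derivative f (p s, q s)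
      + (\<Sum>j\<in>{r..<2*r}. h ^ j *\<^sub>R (jac_apply f (p s, q s) (ep j s, eq j s)
        - cp j *\<^sub>R vderiv_n (j + 1) p s))) (at s)"
    unfolding dp_def using assms
    by (intro has_vector_derivative_add has_vector_derivative_sum e_has_vector_derivative p_ode
        bounded_linear.has_vector_derivative[OF bounded_linear_scaleR_right]) auto
  then show "((\<lambda>s. p s + dp h s) has_vector_derivative f (p s, q s) + lin f h s - wp h s) (at s)"
    unfolding eq_p .
  have eq_q: "g (p s, q s) + (\<Sum>j\<in>{r..<2*r}. h ^ j *\<^sub>R (jac_apply g (p s, q s) (ep j s, eq j s)
        - cq j *\<^sub>R vderiv_n (j + 1) q s)) = g (p s, q s) + lin g h s - wq h s"
    by (simp add: lin_def wq_def jac_apply_perturbation scaleR_right_diff_distrib sum_subtractf)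
  have "((\<lambda>s. q s + dq h s) has_vector_derivative g (p s, q s)
      + (\<Sum>j\<in>{r..<2*r}. h ^ j *\<^sub>R (jac_apply g (p s, q s) (ep j s, eq j s)
        - cq j *\<^sub>R vderiv_n (j + 1) q s))) (at s)"
    unfolding dq_def using assms
    by (intro has_vector_derivative_add has_vector_derivative_sum e_has_vector_derivative q_ode
        bounded_linear.has_vector_derivative[OF bounded_linear_scaleR_right]) auto
  then show "((\<lambda>s. q s + dq h s) has_vector_derivative g (p s, q s) + lin g h s - wq h s) (at s)"
    unfolding eq_q .
qed

lemma field_inner_w_eq_correction_deriv:
  assumes "s \<in> {a<..<b}"
  shows "f (p s, q s) \<bullet> wq h s - g (p s, q s) \<bullet> wp h s = correction_deriv h s"
proof -
  have "f (p s, q s) \<bullet> wq h s - g (p s, q s) \<bullet> wp h s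
      = (\<Sum>j\<in>{r..<2*r}. h ^ j * (cq j * (vderiv_n 1 p s \<bullet> vderiv_n (j+1) q s)
          - cp j * (vderiv_n 1 q s \<bullet> vderiv_n (j+1) p s)))"
    using vderiv_1_eq_field[OF assms]
    by (simp add: wp_def wq_def inner_sum_right sum_subtractf[symmetric] algebra_simps)
  also have "\<dots> = correction_deriv h s"
    unfolding correction_deriv_def by (rule sum_even_reindex[OF r_even]) (simp add: cp_odd cq_odd)
  finally show ?thesis .
qed

lemma energy_has_real_derivative:
  assumes "s \<in> {a<..<b}"
  shows "((\<lambda>s. H (p s + dp h s, q s + dq h s)) has_real_derivative
           correction_deriv h s + energy_defect h s) (at s)"
proof -
  let ?y = "(p s, q s)" and ?yh = "(p s + dp h s, q s + dq h s)"
  have "H differentiable (at z)" for z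
    using H_smooth unfolding smooth_def by (metis empty_subsetI iter_dirderiv.simps(1) list.set(1))
  then have "((\<lambda>s. H (p s + dp h s, q s + dq h s)) has_real_derivative
      pq_derivative H ?yh (f ?y + lin f h s - wp h s, g ?y + lin g h s - wq h s)) (at s)"
    using has_real_derivative_comp_pq[OF has_vector_derivative_Pair[OF
        smooth_part_has_vector_derivative[OF assms]]] by blast
  also have "pq_derivative H ?yh (f ?y + lin f h s - wp h s, g ?y + lin g h s - wq h s)
      = (g ?y + lin g h s + rem g h s) \<bullet> (f ?y + lin f h s - wp h s)
        - (f ?y + lin f h s + rem f h s) \<bullet> (g ?y + lin g h s - wq h s)"
    by (simp add: pq_derivative_grad rem_def)
  also have "\<dots> = f ?y \<bullet> wq h s - g ?y \<bullet> wp h s + energy_defect h s"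
    unfolding symplectic_cancellation energy_defect_def by simp
  finally show ?thesis using field_inner_w_eq_correction_deriv[OF assms] by simp
qed

lemma correction_has_real_derivative:
  assumes "a < t0" "T < b" "s \<in> {t0..T}"
  shows "(correction h t0 has_real_derivative correction_deriv h s) (at s within {t0..T})"
proof -
  have s: "s \<in> {a<..<b}" using assms by auto
  define D1 where "D1 k = h ^ (2*k) *
      (cq (2*k) * (vderiv_n 1 p s \<bullet> vderiv_n (2*k+1) q s + (-1) ^ (k+1) * (vderiv_n (k+1) p s \<bullet> vderiv_n (k+1) q s))
     - cp (2*k) * (vderiv_n 1 q s \<bullet> vderiv_n (2*k+1) p s + (-1) ^ (k+1) * (vderiv_n (k+1) q s \<bullet> vderiv_n (k+1) p s)))"
    for k
  define D2 where "D2 k = h ^ (2*k) * (-1) ^ (k+2) * (cq (2*k) - cp (2*k)) * (vderiv_n (k+1) p s \<bullet> vderiv_n (k+1) q s)"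
    for k
  have alt_p: "((\<lambda>t. \<Sum>l=1..k. (-1) ^ (l+1) *
      (vderiv_n l p t \<bullet> vderiv_n (2*k+1-l) q t - vderiv_n l p t0 \<bullet> vderiv_n (2*k+1-l) q t0))
      has_real_derivative vderiv_n 1 p s \<bullet> vderiv_n (2*k+1) q s
        + (-1) ^ (k+1) * (vderiv_n (k+1) p s \<bullet> vderiv_n (k+1) q s)) (at s)"
    and alt_q: "((\<lambda>t. \<Sum>l=1..k. (-1) ^ (l+1) *
      (vderiv_n l q t \<bullet> vderiv_n (2*k+1-l) p t - vderiv_n l q t0 \<bullet> vderiv_n (2*k+1-l) p t0))
      has_real_derivative vderiv_n 1 q s \<bullet> vderiv_n (2*k+1) p s
        + (-1) ^ (k+1) * (vderiv_n (k+1) q s \<bullet> vderiv_n (k+1) p s)) (at s)" for k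
    by (rule has_real_derivative_alternating_inner_sum; rule vderiv_has_vector_derivative[OF s])+
  have "((\<lambda>t. h ^ (2*k) *
       (cq (2*k) * (\<Sum>l=1..k. (-1) ^ (l+1) *
            (vderiv_n l p t \<bullet> vderiv_n (2*k+1-l) q t - vderiv_n l p t0 \<bullet> vderiv_n (2*k+1-l) q t0))
      - cp (2*k) * (\<Sum>l=1..k. (-1) ^ (l+1) *
            (vderiv_n l q t \<bullet> vderiv_n (2*k+1-l) p t - vderiv_n l q t0 \<bullet> vderiv_n (2*k+1-l) p t0))))
      has_real_derivative D1 k) (at s within {t0..T})" for k
    unfolding D1_def
    by (rule has_field_derivative_at_within) (intro DERIV_cmult DERIV_diff alt_p alt_q)
  moreover have "((\<lambda>t. h ^ (2*k) * (-1) ^ (k+2) * (cq (2*k) - cp (2*k)) *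
      integral {t0..t} (\<lambda>s. vderiv_n (k+1) p s \<bullet> vderiv_n (k+1) q s)) has_real_derivative D2 k)
      (at s within {t0..T})" for k
  proof -
    have "continuous_on {t0..T} (\<lambda>s. vderiv_n (k+1) p s \<bullet> vderiv_n (k+1) q s)"
      using assms by (intro continuous_at_imp_continuous_on ballI continuous_intros vderiv_continuous) auto
    then show ?thesis
      unfolding D2_def using assms(3) by (intro DERIV_cmult integral_has_real_derivative)
  qed
  ultimately have "(correction h t0 has_real_derivative (\<Sum>k\<in>{r div 2..<r}. D1 k) + (\<Sum>k\<in>{r div 2..<r}. D2 k))
      (at s within {t0..T})"
    unfolding correction_def by (intro DERIV_add DERIV_sum)
  also have "(\<Sum>k\<in>{r div 2..<r}. D1 k) + (\<Sum>k\<in>{r div 2..<r}. D2 k) = correction_deriv h s"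
    unfolding correction_deriv_def sum.distrib[symmetric]
    by (intro sum.cong refl) (simp add: D1_def D2_def inner_commute algebra_simps)
  finally show ?thesis .
qed

lemma smooth_part_coefficient_bounds:
  assumes "{t0..T} \<subseteq> {a<..<b}"
  obtains \<epsilon> \<omega> V where
    "\<And>s. s \<in> {t0..T} \<Longrightarrow> (\<Sum>j\<in>{r..<2*r}. norm (ep j s)) + (\<Sum>j\<in>{r..<2*r}. norm (eq j s)) \<le> \<epsilon>"
    "\<And>s. s \<in> {t0..T} \<Longrightarrow> (\<Sum>j\<in>{r..<2*r}. norm (cp j *\<^sub>R vderiv_n (j + 1) p s))
                          + (\<Sum>j\<in>{r..<2*r}. norm (cq j *\<^sub>R vderiv_n (j + 1) q s)) \<le> \<omega>"
    "\<And>s. s \<in> {t0..T} \<Longrightarrow> norm (f (p s, q s)) + norm (g (p s, q s)) \<le> V"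
proof -
  have cont: "continuous_on {t0..T} \<phi>" if "\<And>s. s \<in> {a<..<b} \<Longrightarrow> isCont \<phi> s" for \<phi> :: "real \<Rightarrow> real"
    using assms that by (intro continuous_at_imp_continuous_on) auto
  have e_cont: "isCont (ep j) s" "isCont (eq j) s" if "j \<in> {r..<2*r}" "s \<in> {a<..<b}" for j s
    using e_has_vector_derivative[OF that] by (auto intro: has_vector_derivative_continuous)
  have "continuous_on {t0..T} (\<lambda>s. (\<Sum>j\<in>{r..<2*r}. norm (ep j s)) + (\<Sum>j\<in>{r..<2*r}. norm (eq j s)))"
    (is "continuous_on _ ?\<epsilon>")
    by (rule cont) (auto intro!: continuous_intros e_cont)
  then obtain \<epsilon> where "\<And>s. s \<in> {t0..T} \<Longrightarrow> ?\<epsilon> s \<le> \<epsilon>"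
    using continuous_on_compact_bound[OF compact_Icc] by blast
  moreover have "continuous_on {t0..T} (\<lambda>s. (\<Sum>j\<in>{r..<2*r}. norm (cp j *\<^sub>R vderiv_n (j + 1) p s))
                          + (\<Sum>j\<in>{r..<2*r}. norm (cq j *\<^sub>R vderiv_n (j + 1) q s)))"
    (is "continuous_on _ ?\<omega>")
    by (rule cont) (intro continuous_intros vderiv_continuous)
  then obtain \<omega> where "\<And>s. s \<in> {t0..T} \<Longrightarrow> ?\<omega> s \<le> \<omega>"
    using continuous_on_compact_bound[OF compact_Icc] by blast
  moreover have "continuous_on {t0..T} (\<lambda>s. norm (vderiv_n 1 p s) + norm (vderiv_n 1 q s))"
    by (rule cont) (intro continuous_intros vderiv_continuous)
  then obtain V where "\<And>s. s \<in> {t0..T} \<Longrightarrow> norm (vderiv_n 1 p s) + norm (vderiv_n 1 q s) \<le> V"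
    using continuous_on_compact_bound[OF compact_Icc] by blast
  then have "\<And>s. s \<in> {t0..T} \<Longrightarrow> norm (f (p s, q s)) + norm (g (p s, q s)) \<le> V"
    using assms vderiv_1_eq_field by force
  ultimately show ?thesis using that by blast
qed

lemma field_expansion_bounds:
  assumes "{t0..T} \<subseteq> {a<..<b}"
  obtains \<Lambda> M where "0 \<le> \<Lambda>" "0 \<le> M"
    "\<And>F s \<delta>. F \<in> {f, g} \<Longrightarrow> s \<in> {t0..T} \<Longrightarrow> norm (jac_apply F (p s, q s) \<delta>) \<le> \<Lambda> * norm \<delta>"
    "\<And>F s \<delta>. F \<in> {f, g} \<Longrightarrow> s \<in> {t0..T} \<Longrightarrow> norm \<delta> \<le> 1 \<Longrightarrow>
       norm (F ((p s, q s) + \<delta>) - F (p s, q s) - jac_apply F (p s, q s) \<delta>) \<le> M * (norm \<delta>)\<^sup>2"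
proof -
  define K where "K = (\<lambda>s. (p s, q s)) ` {t0..T}"
  have "continuous_on {t0..T} (\<lambda>s. (p s, q s))"
    using assms vderiv_continuous[where n = 0]
    by (intro continuous_at_imp_continuous_on ballI continuous_Pair) auto
  then have K: "compact K" unfolding K_def by (rule compact_continuous_image[OF _ compact_Icc])
  note field_smooth = smooth_imp_pq_thrice_differentiable_grad[OF H_smooth]
  obtain \<Lambda>f \<Lambda>g where
    \<Lambda>f: "\<And>y \<delta>. y \<in> K \<Longrightarrow> norm (jac_apply f y \<delta>) \<le> \<Lambda>f * norm \<delta>" and
    \<Lambda>g: "\<And>y \<delta>. y \<in> K \<Longrightarrow> norm (jac_apply g y \<delta>) \<le> \<Lambda>g * norm \<delta>"
    using jac_apply_bound[OF field_smooth(2) K] jac_apply_bound[OF field_smooth(1) K] by metis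
  obtain Mf Mg where
    Mf: "\<And>y \<delta>. y \<in> K \<Longrightarrow> norm \<delta> \<le> 1 \<Longrightarrow> norm (f (y + \<delta>) - f y - jac_apply f y \<delta>) \<le> Mf * (norm \<delta>)\<^sup>2" and
    Mg: "\<And>y \<delta>. y \<in> K \<Longrightarrow> norm \<delta> \<le> 1 \<Longrightarrow> norm (g (y + \<delta>) - g y - jac_apply g y \<delta>) \<le> Mg * (norm \<delta>)\<^sup>2"
    using jac_apply_taylor_bound[OF field_smooth(2) K] jac_apply_taylor_bound[OF field_smooth(1) K]
    by metis
  show ?thesis
  proof (rule that[of "\<bar>\<Lambda>f\<bar> + \<bar>\<Lambda>g\<bar>" "\<bar>Mf\<bar> + \<bar>Mg\<bar>"])
    fix F s and \<delta> :: "(real^'d) \<times> (real^'d)"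
    assume F: "F \<in> {f, g}" and s: "s \<in> {t0..T}"
    then have y: "(p s, q s) \<in> K" by (simp add: K_def)
    have "\<Lambda>f * norm \<delta> \<le> (\<bar>\<Lambda>f\<bar> + \<bar>\<Lambda>g\<bar>) * norm \<delta>" "\<Lambda>g * norm \<delta> \<le> (\<bar>\<Lambda>f\<bar> + \<bar>\<Lambda>g\<bar>) * norm \<delta>"
      by (simp_all add: mult_right_mono)
    then show "norm (jac_apply F (p s, q s) \<delta>) \<le> (\<bar>\<Lambda>f\<bar> + \<bar>\<Lambda>g\<bar>) * norm \<delta>"
      using F \<Lambda>f[OF y, of \<delta>] \<Lambda>g[OF y, of \<delta>] by auto
    assume \<delta>: "norm \<delta> \<le> 1"
    have "Mf * (norm \<delta>)\<^sup>2 \<le> (\<bar>Mf\<bar> + \<bar>Mg\<bar>) * (norm \<delta>)\<^sup>2" "Mg * (norm \<delta>)\<^sup>2 \<le> (\<bar>Mf\<bar> + \<bar>Mg\<bar>) * (norm \<delta>)\<^sup>2"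
      by (simp_all add: mult_right_mono)
    then show "norm (F ((p s, q s) + \<delta>) - F (p s, q s) - jac_apply F (p s, q s) \<delta>)
        \<le> (\<bar>Mf\<bar> + \<bar>Mg\<bar>) * (norm \<delta>)\<^sup>2"
      using F order_trans[OF Mf[OF y \<delta>]] order_trans[OF Mg[OF y \<delta>]] by blast
  qed auto
qed

lemma perturbation_norm_le:
  assumes h: "0 < h" "h \<le> 1"
    and \<epsilon>: "(\<Sum>j\<in>{r..<2*r}. norm (ep j s)) + (\<Sum>j\<in>{r..<2*r}. norm (eq j s)) \<le> \<epsilon>"
    and \<omega>: "(\<Sum>j\<in>{r..<2*r}. norm (cp j *\<^sub>R vderiv_n (j + 1) p s))
             + (\<Sum>j\<in>{r..<2*r}. norm (cq j *\<^sub>R vderiv_n (j + 1) q s)) \<le> \<omega>"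
  shows "norm (dp h s, dq h s) \<le> h ^ r * \<epsilon>"
    and "norm (wp h s) \<le> h ^ r * \<omega>" "norm (wq h s) \<le> h ^ r * \<omega>"
proof -
  have pow: "norm (\<Sum>j\<in>{r..<2*r}. h ^ j *\<^sub>R v j) \<le> h ^ r * (\<Sum>j\<in>{r..<2*r}. norm (v j))"
    for v :: "nat \<Rightarrow> real^'d"
    using h by (intro norm_sum_power_scaleR_le) auto
  have "0 \<le> h ^ r" using h by simp
  then show "norm (dp h s, dq h s) \<le> h ^ r * \<epsilon>"
    using norm_Pair_le[of "dp h s" "dq h s"] pow[of "\<lambda>j. ep j s"] pow[of "\<lambda>j. eq j s"] \<epsilon>
    unfolding dp_def dq_def by (smt (verit) distrib_left mult_left_mono)
  show "norm (wp h s) \<le> h ^ r * \<omega>" "norm (wq h s) \<le> h ^ r * \<omega>"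
    using pow[of "\<lambda>j. cp j *\<^sub>R vderiv_n (j + 1) p s"] pow[of "\<lambda>j. cq j *\<^sub>R vderiv_n (j + 1) q s"]
      \<omega> \<open>0 \<le> h ^ r\<close> unfolding wp_def wq_def
    by (smt (verit, best) mult_left_mono sum_nonneg norm_ge_zero)+
qed

lemma energy_defect_pointwise_bound:
  assumes h: "0 < h" "h \<le> 1" "h * \<epsilon> \<le> 1"
    and \<epsilon>: "(\<Sum>j\<in>{r..<2*r}. norm (ep j s)) + (\<Sum>j\<in>{r..<2*r}. norm (eq j s)) \<le> \<epsilon>"
    and \<omega>: "(\<Sum>j\<in>{r..<2*r}. norm (cp j *\<^sub>R vderiv_n (j + 1) p s))
             + (\<Sum>j\<in>{r..<2*r}. norm (cq j *\<^sub>R vderiv_n (j + 1) q s)) \<le> \<omega>"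
    and V: "norm (f (p s, q s)) + norm (g (p s, q s)) \<le> V"
    and \<Lambda>: "\<And>F \<delta>. F \<in> {f, g} \<Longrightarrow> norm (jac_apply F (p s, q s) \<delta>) \<le> \<Lambda> * norm \<delta>" "0 \<le> \<Lambda>"
    and M: "\<And>F \<delta>. F \<in> {f, g} \<Longrightarrow> norm \<delta> \<le> 1 \<Longrightarrow>
       norm (F ((p s, q s) + \<delta>) - F (p s, q s) - jac_apply F (p s, q s) \<delta>) \<le> M * (norm \<delta>)\<^sup>2" "0 \<le> M"
  shows "\<bar>energy_defect h s\<bar> \<le> (2 * (\<Lambda> * \<epsilon>) * \<omega> + 2 * (M * \<epsilon>\<^sup>2) * (V + \<Lambda> * \<epsilon> + \<omega>)) * h ^ (2*r)"
proof -
  let ?e = "h ^ r" and ?\<delta> = "(dp h s, dq h s)"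
  have e: "0 \<le> ?e" "?e \<le> 1" using h by (simp_all add: power_le_one)
  have \<epsilon>0: "0 \<le> \<epsilon>" and \<omega>0: "0 \<le> \<omega>"
    using \<epsilon> \<omega> by (meson add_nonneg_nonneg norm_ge_zero order_trans sum_nonneg)+
  have \<delta>: "norm ?\<delta> \<le> ?e * \<epsilon>" and w: "norm (wp h s) \<le> ?e * \<omega>" "norm (wq h s) \<le> ?e * \<omega>"
    using perturbation_norm_le[OF h(1,2) \<epsilon> \<omega>] by simp_all
  have \<delta>1: "norm ?\<delta> \<le> 1"
  proof (cases "r = 0")
    case False
    then have "?e * \<epsilon> \<le> h * \<epsilon>" using power_decreasing[of 1 r h] h \<epsilon>0 by (simp add: mult_right_mono)
    then show ?thesis using \<delta> h(3) by linarith
  qed (unfold dp_def dq_def, simp)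
  have lin: "norm (lin F h s) \<le> ?e * (\<Lambda> * \<epsilon>)" if "F \<in> {f, g}" for F
    using \<Lambda>(1)[OF that, of ?\<delta>] \<delta> \<open>0 \<le> \<Lambda>\<close> unfolding lin_def
    by (smt (verit) mult.left_commute mult_left_mono)
  have rem: "norm (rem F h s) \<le> ?e * ?e * (M * \<epsilon>\<^sup>2)" if "F \<in> {f, g}" for F
  proof -
    have "norm (rem F h s) \<le> M * (norm ?\<delta>)\<^sup>2"
      using M(1)[OF that \<delta>1] unfolding rem_def lin_def by simp
    also have "\<dots> \<le> M * (?e * \<epsilon>)\<^sup>2"
      using \<delta> \<open>0 \<le> M\<close> by (intro mult_left_mono power_mono) auto
    finally show ?thesis by (simp add: power2_eq_square algebra_simps)
  qed
  have vel: "norm (F (p s, q s) + lin F h s - w) \<le> V + \<Lambda> * \<epsilon> + \<omega>"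
    if "F \<in> {f, g}" "norm w \<le> ?e * \<omega>" for F w
  proof -
    have "norm (f (p s, q s)) \<le> V" "norm (g (p s, q s)) \<le> V"
      using V norm_ge_zero[of "f (p s, q s)"] norm_ge_zero[of "g (p s, q s)"] by linarith+
    then have "norm (F (p s, q s)) \<le> V" using that(1) by blast
    moreover have "?e * (\<Lambda> * \<epsilon>) \<le> \<Lambda> * \<epsilon>" "?e * \<omega> \<le> \<omega>"
      using e \<open>0 \<le> \<Lambda>\<close> \<epsilon>0 \<omega>0 by (simp_all add: mult_left_le_one_le)
    ultimately show ?thesis
      using lin[OF that(1)] that(2) norm_triangle_ineq4[of "F (p s, q s) + lin F h s" w]
        norm_triangle_ineq[of "F (p s, q s)" "lin F h s"] by linarith
  qed
  have fg: "f \<in> {f, g}" "g \<in> {f, g}" by simp_all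
  have "\<bar>energy_defect h s\<bar> \<le> ?e * ?e * (2 * (\<Lambda> * \<epsilon>) * \<omega> + 2 * (M * \<epsilon>\<^sup>2) * (V + \<Lambda> * \<epsilon> + \<omega>))"
    unfolding energy_defect_def
    by (rule abs_energy_defect_le[OF lin[OF fg(1)] lin[OF fg(2)] w rem[OF fg(1)] rem[OF fg(2)]
          vel[OF fg(1) w(1)] vel[OF fg(2) w(2)]])
  moreover have "?e * ?e = h ^ (2*r)" by (simp add: power_add[symmetric] mult_2)
  ultimately show ?thesis by (metis mult.commute)
qed

lemma energy_defect_bound:
  assumes "{t0..T} \<subseteq> {a<..<b}"
  obtains C h0 where "0 < h0"
    "\<And>h s. 0 < h \<Longrightarrow> h \<le> h0 \<Longrightarrow> s \<in> {t0..T} \<Longrightarrow> \<bar>energy_defect h s\<bar> \<le> C * h ^ (2*r)"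
proof -
  obtain \<epsilon> \<omega> V where
    \<epsilon>: "\<And>s. s \<in> {t0..T} \<Longrightarrow> (\<Sum>j\<in>{r..<2*r}. norm (ep j s)) + (\<Sum>j\<in>{r..<2*r}. norm (eq j s)) \<le> \<epsilon>" and
    \<omega>: "\<And>s. s \<in> {t0..T} \<Longrightarrow> (\<Sum>j\<in>{r..<2*r}. norm (cp j *\<^sub>R vderiv_n (j + 1) p s))
                          + (\<Sum>j\<in>{r..<2*r}. norm (cq j *\<^sub>R vderiv_n (j + 1) q s)) \<le> \<omega>" and
    V: "\<And>s. s \<in> {t0..T} \<Longrightarrow> norm (f (p s, q s)) + norm (g (p s, q s)) \<le> V"
    using smooth_part_coefficient_bounds[OF assms] by blast
  obtain \<Lambda> M where "0 \<le> \<Lambda>" "0 \<le> M"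
    and \<Lambda>: "\<And>F s \<delta>. F \<in> {f, g} \<Longrightarrow> s \<in> {t0..T} \<Longrightarrow> norm (jac_apply F (p s, q s) \<delta>) \<le> \<Lambda> * norm \<delta>"
    and M: "\<And>F s \<delta>. F \<in> {f, g} \<Longrightarrow> s \<in> {t0..T} \<Longrightarrow> norm \<delta> \<le> 1 \<Longrightarrow>
       norm (F ((p s, q s) + \<delta>) - F (p s, q s) - jac_apply F (p s, q s) \<delta>) \<le> M * (norm \<delta>)\<^sup>2"
    using field_expansion_bounds[OF assms] by blast
  define h0 where "h0 = 1 / (\<bar>\<epsilon>\<bar> + 1)"
  have "0 < h0" by (simp add: h0_def add_pos_nonneg)
  moreover have "\<bar>energy_defect h s\<bar> \<le> (2 * (\<Lambda> * \<epsilon>) * \<omega> + 2 * (M * \<epsilon>\<^sup>2) * (V + \<Lambda> * \<epsilon> + \<omega>)) * h ^ (2*r)"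
    if h: "0 < h" "h \<le> h0" and s: "s \<in> {t0..T}" for h s
  proof (rule energy_defect_pointwise_bound[OF h(1) _ _ \<epsilon>[OF s] \<omega>[OF s] V[OF s] \<Lambda>[OF _ s] \<open>0 \<le> \<Lambda>\<close>
        M[OF _ s] \<open>0 \<le> M\<close>])
    have "h * \<bar>\<epsilon>\<bar> + h \<le> 1" using h by (simp add: h0_def field_simps)
    moreover have "0 \<le> h * \<bar>\<epsilon>\<bar>" "h * \<epsilon> \<le> h * \<bar>\<epsilon>\<bar>" using h by (simp_all add: mult_left_mono)
    ultimately show "h \<le> 1" "h * \<epsilon> \<le> 1" using h by linarith+
  qed
  ultimately show ?thesis using that by blast
qed

lemma correction_at_start: "correction h t0 t0 = 0"
  by (simp add: correction_def)

lemma modified_energy_error: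
  assumes "a < t0" "T < b"
  obtains C h0 where "0 < h0"
    "\<And>h t. 0 < h \<Longrightarrow> h \<le> h0 \<Longrightarrow> t \<in> {t0..T} \<Longrightarrow>
       \<bar>H (p t + dp h t, q t + dq h t) - H (p t0 + dp h t0, q t0 + dq h t0) - correction h t0 t\<bar>
         \<le> C * (t - t0) * h ^ (2*r)"
proof -
  have I: "{t0..T} \<subseteq> {a<..<b}" using assms by auto
  obtain h0 C where "0 < h0" and defect:
    "\<And>h s. 0 < h \<Longrightarrow> h \<le> h0 \<Longrightarrow> s \<in> {t0..T} \<Longrightarrow> \<bar>energy_defect h s\<bar> \<le> C * h ^ (2*r)"
    using energy_defect_bound[OF I] by metis
  have "\<bar>H (p t + dp h t, q t + dq h t) - H (p t0 + dp h t0, q t0 + dq h t0) - correction h t0 t\<bar>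
      \<le> C * (t - t0) * h ^ (2*r)" if h: "0 < h" "h \<le> h0" and t: "t \<in> {t0..T}" for h t
  proof -
    define F where "F s = H (p s + dp h s, q s + dq h s) - correction h t0 s" for s
    have "(F has_real_derivative energy_defect h s) (at s within {t0..T})" if "s \<in> {t0..T}" for s
    proof -
      have "((\<lambda>s. H (p s + dp h s, q s + dq h s)) has_real_derivative
          correction_deriv h s + energy_defect h s) (at s within {t0..T})"
        by (rule has_field_derivative_at_within, rule energy_has_real_derivative) (use that I in auto)
      then have "(F has_real_derivative (correction_deriv h s + energy_defect h s) - correction_deriv h s)
          (at s within {t0..T})"
        unfolding F_def using that by (intro DERIV_diff correction_has_real_derivative assms)
      then show ?thesis by simp
    qed
    then have "norm (F t - F t0) \<le> C * h ^ (2*r) * norm (t - t0)"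
      using defect[OF h] t by (intro field_differentiable_bound[of "{t0..T}"]) auto
    then show ?thesis using t by (simp add: F_def correction_at_start mult_ac)
  qed
  with \<open>0 < h0\<close> show ?thesis using that by blast
qed

end

theorem theorem3:
  fixes H :: "(real^'d) \<times> (real^'d) \<Rightarrow> real"
    and p q :: "real \<Rightarrow> real^'d"
    and p0 q0 :: "real^'d"
    and a b t0 :: real
    and \<rho>p \<sigma>p \<rho>q \<sigma>q :: "real poly"
    and r :: nat
    and cp cq :: "nat \<Rightarrow> real"
    and ep eq :: "nat \<Rightarrow> real \<Rightarrow> real^'d"
  assumes H_smooth: "smooth H"
    and t0_in: "a < t0" "t0 < b"
    and p_smooth: "smooth_on_real {a<..<b} p"
    and q_smooth: "smooth_on_real {a<..<b} q"
    and p_ode: "\<And>t. t \<in> {a<..<b} \<Longrightarrow> (p has_vector_derivative (- grad_q H (p t, q t))) (at t)"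
    and q_ode: "\<And>t. t \<in> {a<..<b} \<Longrightarrow> (q has_vector_derivative (grad_p H (p t, q t))) (at t)"
    and p_init: "p t0 = p0" and q_init: "q t0 = q0"
    and meth_p: "lmm \<rho>p \<sigma>p" "zero_stable \<rho>p" "lmm_order \<rho>p \<sigma>p r" "symmetric_lmm \<rho>p \<sigma>p"
    and meth_q: "lmm \<rho>q \<sigma>q" "zero_stable \<rho>q" "lmm_order \<rho>q \<sigma>q r" "symmetric_lmm \<rho>q \<sigma>q"
    and lte_p: "lte_constants \<rho>p \<sigma>p r cp"
    and lte_q: "lte_constants \<rho>q \<sigma>q r cq"
    and e_ode: "\<And>j t. j \<in> {r..<2*r} \<Longrightarrow> t \<in> {a<..<b} \<Longrightarrow>
        ((\<lambda>s. (ep j s, eq j s)) has_vector_derivative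
          (jac_p (\<lambda>x. - grad_q H x) (p t, q t) *v ep j t
             + jac_q (\<lambda>x. - grad_q H x) (p t, q t) *v eq j t - cp j *\<^sub>R vderiv_n (j + 1) p t,
           jac_p (\<lambda>x. grad_p H x) (p t, q t) *v ep j t
             + jac_q (\<lambda>x. grad_p H x) (p t, q t) *v eq j t - cq j *\<^sub>R vderiv_n (j + 1) q t)) (at t)"
  shows "\<forall>T\<in>{t0..<b}. \<exists>C h0. h0 > 0 \<and> (\<forall>h t. 0 < h \<and> h \<le> h0 \<and> t \<in> {t0..T} \<longrightarrow>
     (let ph = (\<lambda>s. p s + (\<Sum>j\<in>{r..<2*r}. h ^ j *\<^sub>R ep j s));
          qh = (\<lambda>s. q s + (\<Sum>j\<in>{r..<2*r}. h ^ j *\<^sub>R eq j s))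
      in \<bar>(H (ph t, qh t) - H (ph t0, qh t0))
          - ((\<Sum>k\<in>{r div 2..<r}. h ^ (2*k) *
               (cq (2*k) * (\<Sum>l=1..k. (-1) ^ (l+1) *
                    (vderiv_n l p t \<bullet> vderiv_n (2*k+1-l) q t - vderiv_n l p t0 \<bullet> vderiv_n (2*k+1-l) q t0))
              - cp (2*k) * (\<Sum>l=1..k. (-1) ^ (l+1) *
                    (vderiv_n l q t \<bullet> vderiv_n (2*k+1-l) p t - vderiv_n l q t0 \<bullet> vderiv_n (2*k+1-l) p t0))))
             + (\<Sum>k\<in>{r div 2..<r}. h ^ (2*k) * (-1) ^ (k+2) * (cq (2*k) - cp (2*k)) *
                  integral {t0..t} (\<lambda>s. vderiv_n (k+1) p s \<bullet> vderiv_n (k+1) q s)))\<bar>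
         \<le> C * (t - t0) * h ^ (2*r)))"
proof -
  (* Zero-stability and the initial values play no role: the claim only concerns the smooth part. *)
  have r_even: "even r" and cp_odd: "\<And>j. j \<in> {r..<2*r} \<Longrightarrow> odd j \<Longrightarrow> cp j = 0"
    using symmetric_lmm_even_order_odd_constants[OF meth_p(1,3,4) lte_p] by blast+
  have cq_odd: "\<And>j. j \<in> {r..<2*r} \<Longrightarrow> odd j \<Longrightarrow> cq j = 0"
    using symmetric_lmm_even_order_odd_constants(2)[OF meth_q(1,3,4) lte_q] by blast
  interpret hamiltonian_smooth_part H p q a b r cp cq ep eq
    using H_smooth p_smooth q_smooth p_ode q_ode e_ode r_even cp_odd cq_odd by unfold_locales
  have "\<exists>C h0. 0 < h0 \<and> (\<forall>h t. 0 < h \<and> h \<le> h0 \<and> t \<in> {t0..T} \<longrightarrow>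
      \<bar>H (p t + dp h t, q t + dq h t) - H (p t0 + dp h t0, q t0 + dq h t0) - correction h t0 t\<bar>
        \<le> C * (t - t0) * h ^ (2*r))" if "T < b" for T
    using modified_energy_error[OF t0_in(1) that] by metis
  then show ?thesis unfolding Let_def correction_def dp_def dq_def by auto
qed

end
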